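(* Let $A$ be a finite-vertex graph and $\mathsf V$ a pseudovariety of semigroups containing $B_2$. Let $\gamma\colon\overline{\Omega}_A g\mathsf V\to\overline{\Omega}_{E(A)}\mathsf V$ be the unique continuous homomorphism extending the graph morphism $A\to E(A)$ that collapses all vertices to the single vertex and is the identity on $E(A)$. Then: (1) $\gamma(E(\overline{\Omega}_A g\mathsf V))$ is an open factorial subset of $\overline{\Omega}_{E(A)}\mathsf V$; (2) $\gamma$ is an open mapping whose restriction to $E(\overline{\Omega}_A g\mathsf V)$ is a topological embedding; (3) for all edges $x,y,z$ of $\overline{\Omega}_A g\mathsf V$, if $\gamma(x)\gamma(y)=\gamma(z)$ then $(x,y)\in D(\overline{\Omega}_A g\mathsf V)$ and $xy=z$.
   Context: A graph $A$ has vertices $V(A)$, edges $E(A)$, source/range maps $\alpha,\omega$; finite-vertex means $V(A)$ finite; a set is viewed as a one-vertex graph. A semigroupoid has associative partial multiplication defined on $D(S)=\{(s,t)\in E(S)^2:\alpha(s)=\omega(t)\}$. $g\mathsf V$ is the smallest pseudovariety of semigroupoids containing the pseudovariety of semigroups $\mathsf V$; $\overline{\Omega}_A g\mathsf V$ is the free pro-$g\mathsf V$ semigroupoid over $A$, $\overline{\Omega}_{E(A)}\mathsf V$ the free pro-$\mathsf V$ semigroup over $E(A)$. $B_2$ is the aperiodic Brandt semigroup $(Q\times Q)\cup\{0\}$, $|Q|=2$, with $(p,r)(r,q)=(p,q)$ and all other products $0$. A subset $F$ of a semigroup is factorial if $xy\in F$ implies $x,y\in F$. *)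

theory Defs
  imports "HOL-Analysis.Analysis"
begin

text \<open>A graph: vertices, edges, source map alpha (gsrc) and range map omega (gtgt).\<close>
record ('v, 'e) graph =
  gverts :: "'v set"
  gedges :: "'e set"
  gsrc   :: "'e \<Rightarrow> 'v"
  gtgt   :: "'e \<Rightarrow> 'v"

definition is_graph :: "('v, 'e) graph \<Rightarrow> bool" where
  "is_graph A \<longleftrightarrow> (\<forall>e\<in>gedges A. gsrc A e \<in> gverts A \<and> gtgt A e \<in> gverts A)"

record fsg =
  sg_car :: "nat set"
  sg_mul :: "nat \<Rightarrow> nat \<Rightarrow> nat"

definition fin_sg :: "fsg \<Rightarrow> bool" where
  "fin_sg S \<longleftrightarrow> finite (sg_car S) \<and> sg_car S \<noteq> {} \<and>
     (\<forall>x\<in>sg_car S. \<forall>y\<in>sg_car S. sg_mul S x y \<in> sg_car S) \<and>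
     (\<forall>x\<in>sg_car S. \<forall>y\<in>sg_car S. \<forall>z\<in>sg_car S.
        sg_mul S (sg_mul S x y) z = sg_mul S x (sg_mul S y z))"

definition sg_hom :: "fsg \<Rightarrow> fsg \<Rightarrow> (nat \<Rightarrow> nat) \<Rightarrow> bool" where
  "sg_hom S T h \<longleftrightarrow> h \<in> sg_car S \<rightarrow> sg_car T \<and>
     (\<forall>x\<in>sg_car S. \<forall>y\<in>sg_car S. h (sg_mul S x y) = sg_mul T (h x) (h y))"

definition sg_prod :: "fsg \<Rightarrow> fsg \<Rightarrow> fsg" where
  "sg_prod S T = \<lparr> sg_car = prod_encode ` (sg_car S \<times> sg_car T),
     sg_mul = (\<lambda>a b. prod_encode (sg_mul S (fst (prod_decode a)) (fst (prod_decode b)),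
                                  sg_mul T (snd (prod_decode a)) (snd (prod_decode b)))) \<rparr>"

definition pv_sg :: "fsg set \<Rightarrow> bool" where
  "pv_sg V \<longleftrightarrow> (\<forall>S\<in>V. fin_sg S) \<and>
     (\<forall>S\<in>V. \<forall>C. C \<subseteq> sg_car S \<and> C \<noteq> {} \<and> (\<forall>x\<in>C. \<forall>y\<in>C. sg_mul S x y \<in> C)
          \<longrightarrow> \<lparr> sg_car = C, sg_mul = sg_mul S \<rparr> \<in> V) \<and>
     (\<forall>S\<in>V. \<forall>T h. fin_sg T \<and> sg_hom S T h \<and> h ` sg_car S = sg_car T \<longrightarrow> T \<in> V) \<and>
     (\<forall>S\<in>V. \<forall>T\<in>V. sg_prod S T \<in> V)"

text \<open>The aperiodic Brandt semigroup B2 with Q = {0,1}: 0 is the zero, and the pair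
  (p,q) is encoded as 1 + 2p + q; (p,r)(r,q) = (p,q), all other products are 0.\<close>
definition B2 :: fsg where
  "B2 = \<lparr> sg_car = {0,1,2,3,4},
     sg_mul = (\<lambda>a b. if a \<noteq> 0 \<and> b \<noteq> 0 \<and> (a - 1) mod 2 = (b - 1) div 2
                     then 1 + 2 * ((a - 1) div 2) + (b - 1) mod 2 else 0) \<rparr>"

text \<open>The product s t is defined iff sd_src s = sd_tgt t (alpha(s) = omega(t)).\<close>
record fsgd =
  sd_V   :: "nat set"
  sd_E   :: "nat set"
  sd_src :: "nat \<Rightarrow> nat"
  sd_tgt :: "nat \<Rightarrow> nat"
  sd_mul :: "nat \<Rightarrow> nat \<Rightarrow> nat"

definition fin_sgd :: "fsgd \<Rightarrow> bool" where
  "fin_sgd S \<longleftrightarrow> finite (sd_V S) \<and> finite (sd_E S) \<and>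
     (\<forall>s\<in>sd_E S. sd_src S s \<in> sd_V S \<and> sd_tgt S s \<in> sd_V S) \<and>
     (\<forall>s\<in>sd_E S. \<forall>t\<in>sd_E S. sd_src S s = sd_tgt S t \<longrightarrow>
        sd_mul S s t \<in> sd_E S \<and> sd_src S (sd_mul S s t) = sd_src S t \<and>
        sd_tgt S (sd_mul S s t) = sd_tgt S s) \<and>
     (\<forall>s\<in>sd_E S. \<forall>t\<in>sd_E S. \<forall>r\<in>sd_E S.
        sd_src S s = sd_tgt S t \<and> sd_src S t = sd_tgt S r \<longrightarrow>
        sd_mul S (sd_mul S s t) r = sd_mul S s (sd_mul S t r))"

definition sgd_morph :: "fsgd \<Rightarrow> fsgd \<Rightarrow> (nat \<Rightarrow> nat) \<Rightarrow> (nat \<Rightarrow> nat) \<Rightarrow> bool" where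
  "sgd_morph S T hv he \<longleftrightarrow> hv \<in> sd_V S \<rightarrow> sd_V T \<and> he \<in> sd_E S \<rightarrow> sd_E T \<and>
     (\<forall>s\<in>sd_E S. sd_src T (he s) = hv (sd_src S s) \<and> sd_tgt T (he s) = hv (sd_tgt S s)) \<and>
     (\<forall>s\<in>sd_E S. \<forall>t\<in>sd_E S. sd_src S s = sd_tgt S t \<longrightarrow>
        he (sd_mul S s t) = sd_mul T (he s) (he t))"

text \<open>Division (Tilson): S divides T iff there is a finite semigroupoid R with a quotient
  morphism R -> S (bijective on vertices, surjective on edges, hence full) and a
  faithful morphism R -> T (injective on each hom-set).\<close>
definition sgd_divides :: "fsgd \<Rightarrow> fsgd \<Rightarrow> bool" where
  "sgd_divides S T \<longleftrightarrow> (\<exists>R qv qe fv fe. fin_sgd R \<and>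
     sgd_morph R S qv qe \<and> bij_betw qv (sd_V R) (sd_V S) \<and> qe ` sd_E R = sd_E S \<and>
     sgd_morph R T fv fe \<and>
     (\<forall>r\<in>sd_E R. \<forall>r'\<in>sd_E R. sd_src R r = sd_src R r' \<and> sd_tgt R r = sd_tgt R r' \<and>
          fe r = fe r' \<longrightarrow> r = r'))"

definition sgd_prod :: "fsgd \<Rightarrow> fsgd \<Rightarrow> fsgd" where
  "sgd_prod S T = \<lparr> sd_V = prod_encode ` (sd_V S \<times> sd_V T),
     sd_E = prod_encode ` (sd_E S \<times> sd_E T),
     sd_src = (\<lambda>a. prod_encode (sd_src S (fst (prod_decode a)), sd_src T (snd (prod_decode a)))),
     sd_tgt = (\<lambda>a. prod_encode (sd_tgt S (fst (prod_decode a)), sd_tgt T (snd (prod_decode a)))),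
     sd_mul = (\<lambda>a b. prod_encode (sd_mul S (fst (prod_decode a)) (fst (prod_decode b)),
                                  sd_mul T (snd (prod_decode a)) (snd (prod_decode b)))) \<rparr>"

definition sgd_coprod :: "fsgd \<Rightarrow> fsgd \<Rightarrow> fsgd" where
  "sgd_coprod S T = \<lparr> sd_V = (\<lambda>n. 2 * n) ` sd_V S \<union> (\<lambda>n. 2 * n + 1) ` sd_V T,
     sd_E = (\<lambda>n. 2 * n) ` sd_E S \<union> (\<lambda>n. 2 * n + 1) ` sd_E T,
     sd_src = (\<lambda>a. if even a then 2 * sd_src S (a div 2) else 2 * sd_src T (a div 2) + 1),
     sd_tgt = (\<lambda>a. if even a then 2 * sd_tgt S (a div 2) else 2 * sd_tgt T (a div 2) + 1),
     sd_mul = (\<lambda>a b. if even a then 2 * sd_mul S (a div 2) (b div 2)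
                     else 2 * sd_mul T (a div 2) (b div 2) + 1) \<rparr>"

definition pv_sgd :: "fsgd set \<Rightarrow> bool" where
  "pv_sgd C \<longleftrightarrow> (\<forall>S\<in>C. fin_sgd S) \<and>
     (\<forall>S T. T \<in> C \<and> fin_sgd S \<and> sgd_divides S T \<longrightarrow> S \<in> C) \<and>
     (\<forall>S\<in>C. \<forall>T\<in>C. sgd_prod S T \<in> C) \<and>
     (\<forall>S\<in>C. \<forall>T\<in>C. sgd_coprod S T \<in> C)"

definition sg_as_sgd :: "fsg \<Rightarrow> fsgd" where
  "sg_as_sgd S = \<lparr> sd_V = {0}, sd_E = sg_car S, sd_src = (\<lambda>_. 0), sd_tgt = (\<lambda>_. 0),
     sd_mul = sg_mul S \<rparr>"

definition gV :: "fsg set \<Rightarrow> fsgd set" where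
  "gV V = {S. \<forall>C. pv_sgd C \<and> sg_as_sgd ` V \<subseteq> C \<longrightarrow> S \<in> C}"

section \<open>Free pro-V semigroup over a set X (as compatible families / projective limit)\<close>

definition idxV :: "fsg set \<Rightarrow> 'x set \<Rightarrow> (fsg \<times> ('x \<Rightarrow> nat)) set" where
  "idxV V X = {(S, \<phi>). S \<in> V \<and> \<phi> \<in> PiE X (\<lambda>_. sg_car S)}"

definition OmegaV :: "fsg set \<Rightarrow> 'x set \<Rightarrow> ((fsg \<times> ('x \<Rightarrow> nat)) \<Rightarrow> nat) set" where
  "OmegaV V X = {\<pi> \<in> PiE (idxV V X) (\<lambda>i. sg_car (fst i)).
     \<forall>S \<phi> T \<psi> h. (S, \<phi>) \<in> idxV V X \<and> (T, \<psi>) \<in> idxV V X \<and> sg_hom S T h \<and>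
        (\<forall>x\<in>X. h (\<phi> x) = \<psi> x) \<longrightarrow> h (\<pi> (S, \<phi>)) = \<pi> (T, \<psi>)}"

definition topV :: "fsg set \<Rightarrow> 'x set \<Rightarrow> ((fsg \<times> ('x \<Rightarrow> nat)) \<Rightarrow> nat) topology" where
  "topV V X = subtopology (product_topology (\<lambda>i. discrete_topology (sg_car (fst i))) (idxV V X))
                          (OmegaV V X)"

definition mulV :: "fsg set \<Rightarrow> 'x set \<Rightarrow> ((fsg \<times> ('x \<Rightarrow> nat)) \<Rightarrow> nat)
                    \<Rightarrow> ((fsg \<times> ('x \<Rightarrow> nat)) \<Rightarrow> nat) \<Rightarrow> ((fsg \<times> ('x \<Rightarrow> nat)) \<Rightarrow> nat)" where
  "mulV V X \<pi> \<rho> = restrict (\<lambda>i. sg_mul (fst i) (\<pi> i) (\<rho> i)) (idxV V X)"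

definition genV :: "fsg set \<Rightarrow> 'x set \<Rightarrow> 'x \<Rightarrow> ((fsg \<times> ('x \<Rightarrow> nat)) \<Rightarrow> nat)" where
  "genV V X x = restrict (\<lambda>i. snd i x) (idxV V X)"

section \<open>Free pro-C semigroupoid over a graph A (as compatible families)\<close>

type_synonym ('v, 'e) sidx = "fsgd \<times> ('v \<Rightarrow> nat) \<times> ('e \<Rightarrow> nat)"
text \<open>An edge of the free pro-C semigroupoid: (alpha, omega, family).\<close>
type_synonym ('v, 'e) fedge = "'v \<times> 'v \<times> (('v, 'e) sidx \<Rightarrow> nat)"

definition idxG :: "fsgd set \<Rightarrow> ('v, 'e) graph \<Rightarrow> ('v, 'e) sidx set" where
  "idxG C A = {(S, \<phi>v, \<phi>e). S \<in> C \<and> \<phi>v \<in> PiE (gverts A) (\<lambda>_. sd_V S) \<and>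
      \<phi>e \<in> PiE (gedges A) (\<lambda>_. sd_E S) \<and>
      (\<forall>e\<in>gedges A. sd_src S (\<phi>e e) = \<phi>v (gsrc A e) \<and> sd_tgt S (\<phi>e e) = \<phi>v (gtgt A e))}"

definition EdgesG :: "fsgd set \<Rightarrow> ('v, 'e) graph \<Rightarrow> ('v, 'e) fedge set" where
  "EdgesG C A = {(u, v, \<pi>). u \<in> gverts A \<and> v \<in> gverts A \<and>
      \<pi> \<in> PiE (idxG C A) (\<lambda>i. sd_E (fst i)) \<and>
      (\<forall>S \<phi>v \<phi>e. (S, \<phi>v, \<phi>e) \<in> idxG C A \<longrightarrow>
          sd_src S (\<pi> (S, \<phi>v, \<phi>e)) = \<phi>v u \<and> sd_tgt S (\<pi> (S, \<phi>v, \<phi>e)) = \<phi>v v) \<and>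
      (\<forall>S \<phi>v \<phi>e T \<psi>v \<psi>e hv he. (S, \<phi>v, \<phi>e) \<in> idxG C A \<and> (T, \<psi>v, \<psi>e) \<in> idxG C A \<and>
          sgd_morph S T hv he \<and> (\<forall>x\<in>gverts A. hv (\<phi>v x) = \<psi>v x) \<and>
          (\<forall>e\<in>gedges A. he (\<phi>e e) = \<psi>e e) \<longrightarrow>
          he (\<pi> (S, \<phi>v, \<phi>e)) = \<pi> (T, \<psi>v, \<psi>e))}"

definition e_src :: "('v, 'e) fedge \<Rightarrow> 'v" where "e_src x = fst x"
definition e_tgt :: "('v, 'e) fedge \<Rightarrow> 'v" where "e_tgt x = fst (snd x)"

text \<open>(x,y) in D iff alpha(x) = omega(y); then alpha(xy) = alpha(y), omega(xy) = omega(x).\<close>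
definition mulG :: "fsgd set \<Rightarrow> ('v, 'e) graph \<Rightarrow> ('v, 'e) fedge \<Rightarrow> ('v, 'e) fedge \<Rightarrow> ('v, 'e) fedge" where
  "mulG C A x y = (e_src y, e_tgt x,
      restrict (\<lambda>i. sd_mul (fst i) (snd (snd x) i) (snd (snd y) i)) (idxG C A))"

definition genG :: "fsgd set \<Rightarrow> ('v, 'e) graph \<Rightarrow> 'e \<Rightarrow> ('v, 'e) fedge" where
  "genG C A e = (gsrc A e, gtgt A e, restrict (\<lambda>i. snd (snd i) e) (idxG C A))"

definition topG :: "fsgd set \<Rightarrow> ('v, 'e) graph \<Rightarrow> ('v, 'e) fedge topology" where
  "topG C A = subtopology
     (prod_topology (discrete_topology (gverts A))
       (prod_topology (discrete_topology (gverts A))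
         (product_topology (\<lambda>i. discrete_topology (sd_E (fst i))) (idxG C A))))
     (EdgesG C A)"

definition factorial_in :: "('a \<Rightarrow> 'a \<Rightarrow> 'a) \<Rightarrow> 'a set \<Rightarrow> 'a set \<Rightarrow> bool" where
  "factorial_in mul S F \<longleftrightarrow> F \<subseteq> S \<and> (\<forall>x\<in>S. \<forall>y\<in>S. mul x y \<in> F \<longrightarrow> x \<in> F \<and> y \<in> F)"

end

(*
  The consolidation S^cd of a finite semigroupoid S (its edges together with a zero absorbing
  the undefined products) lies in V for every S in gV. Indeed, the finite semigroupoids with
  this property form a pseudovariety of semigroupoids containing V: for a semigroup S, S^cd is
  a quotient of S x B2; products and coproducts are handled coordinatewise; and a faithful
  morphism R -> T embeds R^cd into T^cd x B_P^cd, where the Brandt semigroup B_P over the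
  vertices P of R lies in V because it is a quotient of a subsemigroup of a power of B2.

  Hence every index (S, phi) of the free pro-gV semigroupoid gives an index (S^cd, phi + 1) of
  the free pro-V semigroup, and gamma(x) takes there the value x(S, phi) + 1: this holds for
  finite paths and passes to all edges by continuity, finite paths being dense. At the index
  of the complete semigroupoid on the vertices of A the value records the endpoints of x.
  Conversely, every a that is nonzero at that index is nonzero at all consolidated indices
  and determines, coordinatewise, an edge gamma_inv(a) with gamma(gamma_inv(a)) = a. So gamma
  is a homeomorphism onto this open set, which is factorial because 0 is a zero, and
  gamma(x) gamma(y) = gamma(z) forces x and y to be consecutive, whence xy = z.
*)

theory Submission
  imports Defs "HOL-Library.Countable_Set"
begin

section \<open>Consolidations and pseudovarieties of semigroups\<close>

text \<open>The edge \<open>s\<close> is represented by \<open>Suc s\<close>, and \<open>0\<close> is the adjoined zero.\<close>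
definition consolidation :: "fsgd \<Rightarrow> fsg" where
  "consolidation S = \<lparr>sg_car = insert 0 (Suc ` sd_E S),
    sg_mul = (\<lambda>a b. if a \<noteq> 0 \<and> b \<noteq> 0 \<and> sd_src S (a - 1) = sd_tgt S (b - 1)
                    then Suc (sd_mul S (a - 1) (b - 1)) else 0)\<rparr>"

lemma consolidation_car: "sg_car (consolidation S) = insert 0 (Suc ` sd_E S)"
  by (simp add: consolidation_def)

lemma zero_in_consolidation [simp]: "0 \<in> sg_car (consolidation S)"
  by (simp add: consolidation_car)

lemma consolidation_mul_Suc [simp]:
  "sg_mul (consolidation S) (Suc s) (Suc t) =
     (if sd_src S s = sd_tgt S t then Suc (sd_mul S s t) else 0)"
  by (simp add: consolidation_def)

lemma consolidation_mul_zero [simp]: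
  "sg_mul (consolidation S) 0 b = 0" "sg_mul (consolidation S) a 0 = 0"
  by (simp_all add: consolidation_def)

lemma consolidation_mul_nonzero:
  "sg_mul (consolidation S) a b \<noteq> 0 \<Longrightarrow> a \<noteq> 0 \<and> b \<noteq> 0"
  by (auto simp add: consolidation_def split: if_splits)

lemma consolidation_closed:
  assumes "fin_sgd S" "a \<in> sg_car (consolidation S)" "b \<in> sg_car (consolidation S)"
  shows "sg_mul (consolidation S) a b \<in> sg_car (consolidation S)"
  using assms unfolding fin_sgd_def by (auto simp: consolidation_car)

lemma sg_prod_car [simp]: "sg_car (sg_prod S T) = prod_encode ` (sg_car S \<times> sg_car T)"
  by (simp add: sg_prod_def)

lemma sg_prod_mul [simp]:
  "sg_mul (sg_prod S T) (prod_encode (a, b)) (prod_encode (c, d)) =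
     prod_encode (sg_mul S a c, sg_mul T b d)"
  by (simp add: sg_prod_def prod_encode_inverse)

lemma B2_car: "sg_car B2 = {0, 1, 2, 3, 4}"
  by (simp add: B2_def)

lemma B2_mul:
  "sg_mul B2 a b = (if a \<noteq> 0 \<and> b \<noteq> 0 \<and> (a - 1) mod 2 = (b - 1) div 2
                    then 1 + 2 * ((a - 1) div 2) + (b - 1) mod 2 else 0)"
  by (simp add: B2_def)

lemma B2_mul_zero [simp]: "sg_mul B2 0 x = 0" "sg_mul B2 x 0 = 0"
  by (auto simp: B2_mul)

lemma B2_closed: "a \<in> sg_car B2 \<Longrightarrow> b \<in> sg_car B2 \<Longrightarrow> sg_mul B2 a b \<in> sg_car B2"
  by (auto simp: B2_car B2_mul)

lemma pv_sg_fin: "pv_sg V \<Longrightarrow> S \<in> V \<Longrightarrow> fin_sg S"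
  unfolding pv_sg_def by (elim conjE) (rule bspec)

lemma fin_sg_mul_closed: "fin_sg S \<Longrightarrow> x \<in> sg_car S \<Longrightarrow> y \<in> sg_car S \<Longrightarrow> sg_mul S x y \<in> sg_car S"
  unfolding fin_sg_def by blast

lemma pv_sg_prod: "pv_sg V \<Longrightarrow> S \<in> V \<Longrightarrow> T \<in> V \<Longrightarrow> sg_prod S T \<in> V"
  by (rule bspec[OF bspec[OF pv_sg_def[THEN iffD1, THEN conjunct2, THEN conjunct2, THEN conjunct2]]])

lemma pv_sg_subsemigroup:
  "pv_sg V \<Longrightarrow> S \<in> V \<Longrightarrow> C \<subseteq> sg_car S \<Longrightarrow> C \<noteq> {} \<Longrightarrow> \<forall>x\<in>C. \<forall>y\<in>C. sg_mul S x y \<in> C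
    \<Longrightarrow> \<lparr>sg_car = C, sg_mul = sg_mul S\<rparr> \<in> V"
  unfolding pv_sg_def by (elim conjE) (drule bspec, assumption, blast)

lemma pv_sg_image:
  "pv_sg V \<Longrightarrow> S \<in> V \<Longrightarrow> fin_sg T \<Longrightarrow> sg_hom S T h \<Longrightarrow> h ` sg_car S = sg_car T \<Longrightarrow> T \<in> V"
  unfolding pv_sg_def by (elim conjE) (drule bspec, assumption, blast)

lemma pv_sg_image_of_subsemigroup:
  assumes pv: "pv_sg V" and S: "S \<in> V" and C: "C \<subseteq> sg_car S" "C \<noteq> {}"
    and closed: "\<forall>a\<in>C. \<forall>b\<in>C. sg_mul S a b \<in> C"
    and onto: "h ` C = sg_car T"
    and hom: "\<forall>a\<in>C. \<forall>b\<in>C. h (sg_mul S a b) = sg_mul T (h a) (h b)"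
  shows "T \<in> V"
proof -
  let ?U = "\<lparr>sg_car = C, sg_mul = sg_mul S\<rparr>"
  have U: "?U \<in> V" by (rule pv_sg_subsemigroup[OF pv S C closed])
  have fin_S: "fin_sg S" using pv S by (rule pv_sg_fin)
  have "finite C" using fin_S C(1) finite_subset unfolding fin_sg_def by blast
  then have "finite (sg_car T)" using onto by (metis finite_imageI)
  moreover have "sg_mul T x y \<in> sg_car T" if xy: "x \<in> sg_car T" "y \<in> sg_car T" for x y
  proof -
    obtain a b where "a \<in> C" "b \<in> C" "x = h a" "y = h b"
      using xy unfolding onto[symmetric] by (elim imageE)
    then have "sg_mul T x y = h (sg_mul S a b)" "sg_mul S a b \<in> C" using hom closed by auto
    then show ?thesis using onto by blast
  qed
  moreover have "sg_mul T (sg_mul T x y) z = sg_mul T x (sg_mul T y z)"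
    if xyz: "x \<in> sg_car T" "y \<in> sg_car T" "z \<in> sg_car T" for x y z
  proof -
    obtain a b c where abc: "a \<in> C" "b \<in> C" "c \<in> C" "x = h a" "y = h b" "z = h c"
      using xyz unfolding onto[symmetric] by (elim imageE)
    have "sg_mul S (sg_mul S a b) c = sg_mul S a (sg_mul S b c)"
      using fin_S abc C unfolding fin_sg_def by blast
    moreover have "sg_mul T (sg_mul T x y) z = h (sg_mul S (sg_mul S a b) c)"
      using hom closed abc by simp
    moreover have "sg_mul T x (sg_mul T y z) = h (sg_mul S a (sg_mul S b c))"
      using hom closed abc by simp
    ultimately show ?thesis by simp
  qed
  moreover have "sg_car T \<noteq> {}" using onto C(2) by blast
  ultimately have "fin_sg T" unfolding fin_sg_def by blast
  moreover have "sg_hom ?U T h" unfolding sg_hom_def using onto hom by auto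
  ultimately show ?thesis using pv_sg_image[OF pv U] onto by simp
qed

text \<open>In \<open>B2\<close> the elements \<open>0\<close> and \<open>1 = (0,0)\<close> form a two-element semilattice, so
  \<open>S \<times> {0,1}\<close> maps onto \<open>S\<close> with a zero adjoined.\<close>
lemma consolidation_sg_as_sgd:
  assumes pv: "pv_sg V" and S: "S \<in> V" and B2: "B2 \<in> V"
  shows "consolidation (sg_as_sgd S) \<in> V"
proof -
  have fin_S: "fin_sg S" by (rule pv_sg_fin[OF pv S])
  obtain s0 where s0: "s0 \<in> sg_car S" using fin_S unfolding fin_sg_def by blast
  define C where "C = prod_encode ` (sg_car S \<times> {0, 1})"
  define h where "h y = (if snd (prod_decode y) = 1 then Suc (fst (prod_decode y)) else 0)" for y
  have B2_01: "sg_mul B2 b d = (if b = 1 \<and> d = 1 then 1 else 0)" if "b \<in> {0, 1}" "d \<in> {0, 1}" for b d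
    using that by (auto simp: B2_mul)
  have closed_S: "sg_mul S a c \<in> sg_car S" if "a \<in> sg_car S" "c \<in> sg_car S" for a c
    using fin_S that by (simp add: fin_sg_def)
  show ?thesis
  proof (rule pv_sg_image_of_subsemigroup[OF pv pv_sg_prod[OF pv S B2], where C = C and h = h])
    show "C \<subseteq> sg_car (sg_prod S B2)" "C \<noteq> {}" using s0 by (auto simp: C_def B2_car)
    show "\<forall>a\<in>C. \<forall>b\<in>C. sg_mul (sg_prod S B2) a b \<in> C"
      using B2_01 closed_S by (auto simp: C_def)
    show "\<forall>a\<in>C. \<forall>c\<in>C. h (sg_mul (sg_prod S B2) a c) = sg_mul (consolidation (sg_as_sgd S)) (h a) (h c)"
    proof (intro ballI)
      fix a c assume "a \<in> C" "c \<in> C"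
      then obtain s b t d where "a = prod_encode (s, b)" "c = prod_encode (t, d)" "b \<in> {0, 1}" "d \<in> {0, 1}"
        by (auto simp: C_def)
      then show "h (sg_mul (sg_prod S B2) a c) = sg_mul (consolidation (sg_as_sgd S)) (h a) (h c)"
        using B2_01[of b d] by (auto simp: h_def sg_as_sgd_def)
    qed
    have "0 \<in> h ` C" using s0 by (intro image_eqI[where x = "prod_encode (s0, 0)"]) (auto simp: C_def h_def)
    moreover have "Suc t \<in> h ` C" if "t \<in> sg_car S" for t
      using that by (intro image_eqI[where x = "prod_encode (t, 1)"]) (auto simp: C_def h_def)
    moreover have "h ` C \<subseteq> sg_car (consolidation (sg_as_sgd S))"
      by (auto simp: C_def h_def consolidation_car sg_as_sgd_def)
    ultimately show "h ` C = sg_car (consolidation (sg_as_sgd S))"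
      by (auto simp: consolidation_car sg_as_sgd_def)
  qed
qed

lemma consolidation_car_eqI:
  assumes "h ` C \<subseteq> sg_car (consolidation S)" "0 \<in> h ` C" "\<And>s. s \<in> sd_E S \<Longrightarrow> Suc s \<in> h ` C"
  shows "h ` C = sg_car (consolidation S)"
  using assms by (auto simp: consolidation_car)

lemma sgd_prod_simps [simp]:
  "sd_V (sgd_prod S T) = prod_encode ` (sd_V S \<times> sd_V T)"
  "sd_E (sgd_prod S T) = prod_encode ` (sd_E S \<times> sd_E T)"
  "sd_src (sgd_prod S T) (prod_encode (s, t)) = prod_encode (sd_src S s, sd_src T t)"
  "sd_tgt (sgd_prod S T) (prod_encode (s, t)) = prod_encode (sd_tgt S s, sd_tgt T t)"
  "sd_mul (sgd_prod S T) (prod_encode (s, t)) (prod_encode (s', t')) =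
     prod_encode (sd_mul S s s', sd_mul T t t')"
  by (simp_all add: sgd_prod_def)

lemma fin_sgd_prod: "fin_sgd S \<Longrightarrow> fin_sgd T \<Longrightarrow> fin_sgd (sgd_prod S T)"
  unfolding fin_sgd_def by auto

lemma consolidation_sgd_prod:
  assumes pv: "pv_sg V" and S: "consolidation S \<in> V" and T: "consolidation T \<in> V"
    and fin_S: "fin_sgd S" and fin_T: "fin_sgd T"
  shows "consolidation (sgd_prod S T) \<in> V"
proof -
  define P where "P = sg_prod (consolidation S) (consolidation T)"
  define h where "h y = (case prod_decode y of (a, b) \<Rightarrow>
    if a \<noteq> 0 \<and> b \<noteq> 0 then Suc (prod_encode (a - 1, b - 1)) else 0)" for y
  show ?thesis
  proof (rule pv_sg_image_of_subsemigroup[OF pv pv_sg_prod[OF pv S T], where C = "sg_car P" and h = h,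
        folded P_def])
    show "sg_car P \<subseteq> sg_car P" "sg_car P \<noteq> {}" by (auto simp: P_def consolidation_car)
    show "\<forall>a\<in>sg_car P. \<forall>b\<in>sg_car P. sg_mul P a b \<in> sg_car P"
      using fin_S fin_T unfolding fin_sgd_def by (auto simp: P_def consolidation_car)
    show "\<forall>a\<in>sg_car P. \<forall>b\<in>sg_car P. h (sg_mul P a b) = sg_mul (consolidation (sgd_prod S T)) (h a) (h b)"
      by (auto simp: P_def consolidation_car h_def)
    show "h ` sg_car P = sg_car (consolidation (sgd_prod S T))"
    proof (rule consolidation_car_eqI)
      show "h ` sg_car P \<subseteq> sg_car (consolidation (sgd_prod S T))"
        by (auto simp: P_def consolidation_car h_def)
      show "0 \<in> h ` sg_car P"
        by (intro image_eqI[where x = "prod_encode (0, 0)"]) (auto simp: P_def h_def)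
      fix st assume "st \<in> sd_E (sgd_prod S T)"
      then obtain s t where "s \<in> sd_E S" "t \<in> sd_E T" "st = prod_encode (s, t)" by auto
      then show "Suc st \<in> h ` sg_car P"
        by (intro image_eqI[where x = "prod_encode (Suc s, Suc t)"]) (auto simp: P_def h_def consolidation_car)
    qed
  qed
qed

lemma sgd_coprod_simps [simp]:
  "sd_V (sgd_coprod S T) = (\<lambda>n. 2 * n) ` sd_V S \<union> (\<lambda>n. 2 * n + 1) ` sd_V T"
  "sd_E (sgd_coprod S T) = (\<lambda>n. 2 * n) ` sd_E S \<union> (\<lambda>n. 2 * n + 1) ` sd_E T"
  "sd_src (sgd_coprod S T) (2 * s) = 2 * sd_src S s"
  "sd_tgt (sgd_coprod S T) (2 * s) = 2 * sd_tgt S s"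
  "sd_src (sgd_coprod S T) (Suc (2 * t)) = Suc (2 * sd_src T t)"
  "sd_tgt (sgd_coprod S T) (Suc (2 * t)) = Suc (2 * sd_tgt T t)"
  "sd_mul (sgd_coprod S T) (2 * s) (2 * s') = 2 * sd_mul S s s'"
  "sd_mul (sgd_coprod S T) (Suc (2 * t)) b = Suc (2 * sd_mul T t (b div 2))"
  by (simp_all add: sgd_coprod_def)

lemma even_neq_odd [simp]: "2 * (a::nat) \<noteq> Suc (2 * b)" "Suc (2 * (b::nat)) \<noteq> 2 * a"
  by presburger+

lemma fin_sgd_coprod: "fin_sgd S \<Longrightarrow> fin_sgd T \<Longrightarrow> fin_sgd (sgd_coprod S T)"
  unfolding fin_sgd_def by auto

lemma consolidation_sgd_coprod:
  assumes pv: "pv_sg V" and S: "consolidation S \<in> V" and T: "consolidation T \<in> V"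
    and fin_S: "fin_sgd S" and fin_T: "fin_sgd T"
  shows "consolidation (sgd_coprod S T) \<in> V"
proof -
  define C where "C = {prod_encode (a, 0) |a. a \<in> sg_car (consolidation S)}
    \<union> {prod_encode (0, b) |b. b \<in> sg_car (consolidation T)}"
  define h where "h y = (case prod_decode y of (a, b) \<Rightarrow>
    if a \<noteq> 0 then Suc (2 * (a - 1)) else if b \<noteq> 0 then Suc (2 * (b - 1) + 1) else 0)" for y
  show ?thesis
  proof (rule pv_sg_image_of_subsemigroup[OF pv pv_sg_prod[OF pv S T], where C = C and h = h])
    show "C \<subseteq> sg_car (sg_prod (consolidation S) (consolidation T))" "C \<noteq> {}"
      by (auto simp: C_def consolidation_car)
    show "\<forall>a\<in>C. \<forall>b\<in>C. sg_mul (sg_prod (consolidation S) (consolidation T)) a b \<in> C"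
      using consolidation_closed[OF fin_S] consolidation_closed[OF fin_T] by (auto simp: C_def)
    show "\<forall>a\<in>C. \<forall>b\<in>C. h (sg_mul (sg_prod (consolidation S) (consolidation T)) a b) =
        sg_mul (consolidation (sgd_coprod S T)) (h a) (h b)"
      by (auto simp: C_def consolidation_car h_def)
    show "h ` C = sg_car (consolidation (sgd_coprod S T))"
    proof (rule consolidation_car_eqI)
      show "h ` C \<subseteq> sg_car (consolidation (sgd_coprod S T))"
        by (auto simp: C_def consolidation_car h_def)
      show "0 \<in> h ` C" by (intro image_eqI[where x = "prod_encode (0, 0)"]) (auto simp: C_def h_def)
      fix st assume "st \<in> sd_E (sgd_coprod S T)"
      then consider s where "s \<in> sd_E S" "st = 2 * s" | t where "t \<in> sd_E T" "st = 2 * t + 1"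
        by auto
      then show "Suc st \<in> h ` C"
      proof cases
        case (1 s) then show ?thesis
          by (intro image_eqI[where x = "prod_encode (Suc s, 0)"]) (auto simp: h_def C_def consolidation_car)
      next
        case (2 t) then show ?thesis
          by (intro image_eqI[where x = "prod_encode (0, Suc t)"]) (auto simp: h_def C_def consolidation_car)
      qed
    qed
  qed
qed

section \<open>Brandt semigroups\<close>

text \<open>One edge \<open>(a, b)\<close> from \<open>b\<close> to \<open>a\<close> for all vertices \<open>a, b\<close>; the consolidation is the
  Brandt semigroup over \<open>P\<close>.\<close>
definition complete_sgd :: "nat set \<Rightarrow> fsgd" where
  "complete_sgd P = \<lparr>sd_V = P, sd_E = prod_encode ` (P \<times> P), sd_src = (\<lambda>e. snd (prod_decode e)),
     sd_tgt = (\<lambda>e. fst (prod_decode e)),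
     sd_mul = (\<lambda>a b. prod_encode (fst (prod_decode a), snd (prod_decode b)))\<rparr>"

lemma complete_sgd_simps [simp]:
  "sd_V (complete_sgd P) = P" "sd_E (complete_sgd P) = prod_encode ` (P \<times> P)"
  "sd_src (complete_sgd P) (prod_encode (a, b)) = b" "sd_tgt (complete_sgd P) (prod_encode (a, b)) = a"
  "sd_mul (complete_sgd P) (prod_encode (a, b)) (prod_encode (c, d)) = prod_encode (a, d)"
  by (simp_all add: complete_sgd_def)

lemma fin_sgd_complete_sgd: "finite P \<Longrightarrow> fin_sgd (complete_sgd P)"
  unfolding fin_sgd_def by auto

text \<open>The Rees quotient \<open>T / Z\<close> contains the Brandt semigroup over \<open>P\<close>: the matrix units
  \<open>f a b\<close> (indexed by all numbers) multiply as in it as soon as the indices that matter lie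
  in \<open>P\<close>.\<close>
locale brandt_cover =
  fixes V :: "fsg set" and P :: "nat set" and T :: fsg and f :: "nat \<Rightarrow> nat \<Rightarrow> nat" and Z :: "nat set"
  assumes member: "T \<in> V"
    and ideal_subset: "Z \<subseteq> sg_car T" and ideal_nonempty: "Z \<noteq> {}"
    and ideal_right: "\<And>z t. z \<in> Z \<Longrightarrow> t \<in> sg_car T \<Longrightarrow> sg_mul T z t \<in> Z"
    and ideal_left: "\<And>z t. z \<in> Z \<Longrightarrow> t \<in> sg_car T \<Longrightarrow> sg_mul T t z \<in> Z"
    and unit_car: "\<And>a b. f a b \<in> sg_car T"
    and unit_notin_ideal: "\<And>a b. f a b \<notin> Z"
    and unit_mul: "\<And>a b c. sg_mul T (f a b) (f b c) = f a c"
    and unit_mul_mismatch: "\<And>a b c d. b \<noteq> c \<Longrightarrow> b \<in> P \<or> c \<in> P \<Longrightarrow> sg_mul T (f a b) (f c d) \<in> Z"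
    and unit_inj_left: "\<And>a b c d. f a b = f c d \<Longrightarrow> a \<in> P \<or> c \<in> P \<Longrightarrow> a = c"
    and unit_inj_right: "\<And>a b c d. f a b = f c d \<Longrightarrow> b \<in> P \<or> d \<in> P \<Longrightarrow> b = d"

lemma brandt_cover_empty: "B2 \<in> V \<Longrightarrow> brandt_cover V {} B2 (\<lambda>a b. 1) {0}"
  by unfold_locales (simp_all add: B2_car B2_mul)

text \<open>The element \<open>([a = p], [b = p])\<close> of \<open>B2\<close>, in the encoding used for \<open>B2\<close>.\<close>
definition B2_indicator :: "nat \<Rightarrow> nat \<Rightarrow> nat \<Rightarrow> nat" where
  "B2_indicator p a b = 1 + 2 * (if a = p then 1 else 0) + (if b = p then 1 else 0)"

lemma B2_indicator_car: "B2_indicator p a b \<in> sg_car B2" "B2_indicator p a b \<noteq> 0"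
  by (auto simp: B2_indicator_def B2_car)

lemma B2_indicator_mul: "sg_mul B2 (B2_indicator p a b) (B2_indicator p b c) = B2_indicator p a c"
  by (auto simp: B2_indicator_def B2_mul)

lemma B2_indicator_mul_mismatch:
  "(b = p) \<noteq> (c = p) \<Longrightarrow> sg_mul B2 (B2_indicator p a b) (B2_indicator p c d) = 0"
  by (auto simp: B2_indicator_def B2_mul)

lemma B2_indicator_inj:
  "B2_indicator p a b = B2_indicator p c d \<Longrightarrow> (a = p) = (c = p) \<and> (b = p) = (d = p)"
  by (auto simp: B2_indicator_def split: if_splits)

context brandt_cover
begin

lemma insert:
  assumes pv: "pv_sg V" and B2: "B2 \<in> V"
  shows "brandt_cover V (insert p P) (sg_prod T B2) (\<lambda>a b. prod_encode (f a b, B2_indicator p a b))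
    (prod_encode ` ((Z \<times> sg_car B2) \<union> (sg_car T \<times> {0})))"
    (is "brandt_cover V _ ?T ?f ?Z")
proof unfold_locales
  have closed: "sg_mul T x y \<in> sg_car T" if "x \<in> sg_car T" "y \<in> sg_car T" for x y
    using fin_sg_mul_closed[OF pv_sg_fin[OF pv member] that] .
  show "?T \<in> V" by (rule pv_sg_prod[OF pv member B2])
  show "?Z \<subseteq> sg_car ?T" "?Z \<noteq> {}" using ideal_subset ideal_nonempty B2_car by auto
  show "sg_mul ?T z t \<in> ?Z" "sg_mul ?T t z \<in> ?Z" if z: "z \<in> ?Z" and t: "t \<in> sg_car ?T" for z t
  proof -
    obtain z1 z2 where zz: "z = prod_encode (z1, z2)" "(z1, z2) \<in> (Z \<times> sg_car B2) \<union> (sg_car T \<times> {0})"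
      using z by auto
    obtain t1 t2 where tt: "t = prod_encode (t1, t2)" "t1 \<in> sg_car T" "t2 \<in> sg_car B2"
      using t by auto
    have "sg_mul ?T z t \<in> ?Z \<and> sg_mul ?T t z \<in> ?Z"
    proof (cases "z1 \<in> Z")
      case True
      then show ?thesis using zz tt ideal_right ideal_left B2_closed closed by (auto intro!: imageI)
    next
      case False
      then have "z2 = 0" "z1 \<in> sg_car T" using zz by auto
      then show ?thesis using zz tt closed by (auto intro!: imageI)
    qed
    then show "sg_mul ?T z t \<in> ?Z" "sg_mul ?T t z \<in> ?Z" by blast+
  qed
  show "?f a b \<in> sg_car ?T" "?f a b \<notin> ?Z" for a b
    using unit_car unit_notin_ideal B2_indicator_car[of p a b] by auto
  show "sg_mul ?T (?f a b) (?f b c) = ?f a c" for a b c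
    by (simp add: unit_mul B2_indicator_mul)
  show "sg_mul ?T (?f a b) (?f c d) \<in> ?Z" if "b \<noteq> c" "b \<in> insert p P \<or> c \<in> insert p P" for a b c d
  proof (cases "b = p \<or> c = p")
    case True
    then have "(b = p) \<noteq> (c = p)" using that by auto
    then show ?thesis using closed unit_car by (simp add: B2_indicator_mul_mismatch)
  next
    case False
    then have "sg_mul T (f a b) (f c d) \<in> Z" using unit_mul_mismatch that by auto
    then show ?thesis using B2_closed B2_indicator_car by auto
  qed
  show "a = c" if "?f a b = ?f c d" "a \<in> insert p P \<or> c \<in> insert p P" for a b c d
    using that unit_inj_left[of a b c d] B2_indicator_inj[of p a b c d] by auto
  show "b = d" if "?f a b = ?f c d" "b \<in> insert p P \<or> d \<in> insert p P" for a b c d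
    using that unit_inj_right[of a b c d] B2_indicator_inj[of p a b c d] by auto
qed

end

lemma brandt_cover_exists:
  assumes pv: "pv_sg V" and B2: "B2 \<in> V" and fin: "finite P"
  shows "\<exists>T f Z. brandt_cover V P T f Z"
  using fin
proof (induction P rule: finite_induct)
  case empty
  then show ?case using brandt_cover_empty[OF B2] by blast
next
  case (insert p P)
  then show ?case using brandt_cover.insert[OF _ pv B2] by blast
qed


definition (in brandt_cover) unit_index :: "nat \<Rightarrow> nat" where
  "unit_index x = (if x \<in> Z then 0 else Suc (prod_encode (SOME ab. ab \<in> P \<times> P \<and> f (fst ab) (snd ab) = x)))"

lemma (in brandt_cover) unit_index_unit:
  assumes ab: "a \<in> P" "b \<in> P"
  shows "unit_index (f a b) = Suc (prod_encode (a, b))"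
proof -
  have "(SOME ab. ab \<in> P \<times> P \<and> f (fst ab) (snd ab) = f a b) = (a, b)"
  proof (rule some_equality)
    fix ab assume "ab \<in> P \<times> P \<and> f (fst ab) (snd ab) = f a b"
    then show "ab = (a, b)"
      using unit_inj_left[of "fst ab" "snd ab" a b] unit_inj_right[of "fst ab" "snd ab" a b] ab
      by (cases ab) auto
  qed (use ab in simp)
  then show ?thesis using unit_notin_ideal by (simp add: unit_index_def)
qed

lemma (in brandt_cover) unit_index_ideal: "z \<in> Z \<Longrightarrow> unit_index z = 0"
  by (simp add: unit_index_def)

lemma (in brandt_cover) consolidation_complete_sgd:
  assumes pv: "pv_sg V"
  shows "consolidation (complete_sgd P) \<in> V"
proof -
  define C where "C = {f a b |a b. a \<in> P \<and> b \<in> P} \<union> Z"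
  have C_car: "C \<subseteq> sg_car T" using ideal_subset unit_car by (auto simp: C_def)
  have C_mul: "sg_mul T x y \<in> C \<and> unit_index (sg_mul T x y) = sg_mul (consolidation (complete_sgd P)) (unit_index x) (unit_index y)"
    if xy: "x \<in> C" "y \<in> C" for x y
  proof (cases "x \<in> Z \<or> y \<in> Z")
    case True
    then have "sg_mul T x y \<in> Z" using ideal_right ideal_left xy C_car by blast
    then show ?thesis using True unit_index_ideal by (auto simp: C_def)
  next
    case False
    then obtain a b c d where abcd: "x = f a b" "y = f c d" "a \<in> P" "b \<in> P" "c \<in> P" "d \<in> P"
      using xy by (auto simp: C_def)
    show ?thesis
    proof (cases "b = c")
      case True
      then show ?thesis using abcd unit_mul unit_index_unit by (auto simp: C_def)
    next
      case False
      then have "sg_mul T x y \<in> Z" using abcd unit_mul_mismatch by blast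
      then show ?thesis using False abcd unit_index_unit unit_index_ideal by (auto simp: C_def)
    qed
  qed
  show ?thesis
  proof (rule pv_sg_image_of_subsemigroup[OF pv member C_car, where h = unit_index])
    show "C \<noteq> {}" using ideal_nonempty by (auto simp: C_def)
    show "\<forall>x\<in>C. \<forall>y\<in>C. sg_mul T x y \<in> C"
      "\<forall>x\<in>C. \<forall>y\<in>C. unit_index (sg_mul T x y) = sg_mul (consolidation (complete_sgd P)) (unit_index x) (unit_index y)"
      using C_mul by blast+
    show "unit_index ` C = sg_car (consolidation (complete_sgd P))"
    proof (rule consolidation_car_eqI)
      show "unit_index ` C \<subseteq> sg_car (consolidation (complete_sgd P))"
        using unit_index_unit unit_index_ideal by (auto simp: C_def consolidation_car)
      show "0 \<in> unit_index ` C" using ideal_nonempty unit_index_ideal by (force simp: C_def)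
      fix ab assume "ab \<in> sd_E (complete_sgd P)"
      then obtain a b where "a \<in> P" "b \<in> P" "ab = prod_encode (a, b)" by auto
      then show "Suc ab \<in> unit_index ` C" using unit_index_unit by (intro image_eqI[where x = "f a b"]) (auto simp: C_def)
    qed
  qed
qed

lemma consolidation_complete_sgd:
  "pv_sg V \<Longrightarrow> B2 \<in> V \<Longrightarrow> finite P \<Longrightarrow> consolidation (complete_sgd P) \<in> V"
  using brandt_cover_exists brandt_cover.consolidation_complete_sgd by metis

section \<open>Consolidations of members of \<open>gV\<close>\<close>

lemma sgd_morphD:
  assumes "sgd_morph S T hv he"
  shows "\<And>v. v \<in> sd_V S \<Longrightarrow> hv v \<in> sd_V T"
    "\<And>s. s \<in> sd_E S \<Longrightarrow> he s \<in> sd_E T"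
    "\<And>s. s \<in> sd_E S \<Longrightarrow> sd_src T (he s) = hv (sd_src S s)"
    "\<And>s. s \<in> sd_E S \<Longrightarrow> sd_tgt T (he s) = hv (sd_tgt S s)"
    "\<And>s t. s \<in> sd_E S \<Longrightarrow> t \<in> sd_E S \<Longrightarrow> sd_src S s = sd_tgt S t \<Longrightarrow>
      he (sd_mul S s t) = sd_mul T (he s) (he t)"
  using assms unfolding sgd_morph_def by blast+

lemma fin_sgdD:
  assumes "fin_sgd S"
  shows "finite (sd_V S)" "finite (sd_E S)"
    "\<And>s. s \<in> sd_E S \<Longrightarrow> sd_src S s \<in> sd_V S"
    "\<And>s. s \<in> sd_E S \<Longrightarrow> sd_tgt S s \<in> sd_V S"
    "\<And>s t. s \<in> sd_E S \<Longrightarrow> t \<in> sd_E S \<Longrightarrow> sd_src S s = sd_tgt S t \<Longrightarrow> sd_mul S s t \<in> sd_E S"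
    "\<And>s t. s \<in> sd_E S \<Longrightarrow> t \<in> sd_E S \<Longrightarrow> sd_src S s = sd_tgt S t \<Longrightarrow>
      sd_src S (sd_mul S s t) = sd_src S t"
    "\<And>s t. s \<in> sd_E S \<Longrightarrow> t \<in> sd_E S \<Longrightarrow> sd_src S s = sd_tgt S t \<Longrightarrow>
      sd_tgt S (sd_mul S s t) = sd_tgt S s"
    "\<And>s t r. s \<in> sd_E S \<Longrightarrow> t \<in> sd_E S \<Longrightarrow> r \<in> sd_E S \<Longrightarrow> sd_src S s = sd_tgt S t \<Longrightarrow>
      sd_src S t = sd_tgt S r \<Longrightarrow> sd_mul S (sd_mul S s t) r = sd_mul S s (sd_mul S t r)"
  using assms unfolding fin_sgd_def by blast+

text \<open>An edge \<open>r\<close> of \<open>R\<close> coded by its image in \<open>T\<^sup>c\<^sup>d\<close> together with its position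
  \<open>(\<omega> r, \<alpha> r)\<close> in the Brandt semigroup over the vertices of \<open>R\<close>; for a faithful \<open>fe\<close>
  the code is injective.\<close>
definition brandt_code :: "fsgd \<Rightarrow> (nat \<Rightarrow> nat) \<Rightarrow> nat \<Rightarrow> nat" where
  "brandt_code R fe r = prod_encode (Suc (fe r), Suc (prod_encode (sd_tgt R r, sd_src R r)))"

lemma brandt_code_mul:
  assumes fin_R: "fin_sgd R" and morph: "sgd_morph R T fv fe" and r: "r \<in> sd_E R" "r' \<in> sd_E R"
  shows "sg_mul (sg_prod (consolidation T) (consolidation (complete_sgd (sd_V R))))
      (brandt_code R fe r) (brandt_code R fe r') =
    (if sd_src R r = sd_tgt R r' then brandt_code R fe (sd_mul R r r')
     else prod_encode (sg_mul (consolidation T) (Suc (fe r)) (Suc (fe r')), 0))"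
proof (cases "sd_src R r = sd_tgt R r'")
  case True
  then have "sd_src T (fe r) = sd_tgt T (fe r')" using sgd_morphD(3,4)[OF morph] r by simp
  then show ?thesis using True r sgd_morphD(5)[OF morph] fin_sgdD(6,7)[OF fin_R] by (simp add: brandt_code_def)
qed (simp add: brandt_code_def)

lemma consolidation_faithful:
  assumes pv: "pv_sg V" and B2: "B2 \<in> V" and fin_R: "fin_sgd R" and fin_T: "fin_sgd T"
    and T: "consolidation T \<in> V" and morph: "sgd_morph R T fv fe"
    and faithful: "\<forall>r\<in>sd_E R. \<forall>r'\<in>sd_E R.
      sd_src R r = sd_src R r' \<and> sd_tgt R r = sd_tgt R r' \<and> fe r = fe r' \<longrightarrow> r = r'"
  shows "consolidation R \<in> V"
proof -
  note M = sgd_morphD[OF morph] and F = fin_sgdD[OF fin_R]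
  define P where "P = sg_prod (consolidation T) (consolidation (complete_sgd (sd_V R)))"
  have P: "P \<in> V"
    unfolding P_def using pv_sg_prod[OF pv T consolidation_complete_sgd[OF pv B2 F(1)]] .
  let ?code = "brandt_code R fe"
  have code_inj: "r = r'" if "r \<in> sd_E R" "r' \<in> sd_E R" "?code r = ?code r'" for r r'
    using faithful that by (auto simp: brandt_code_def)
  define h where "h y = (if snd (prod_decode y) = 0 then 0 else Suc (THE r. r \<in> sd_E R \<and> ?code r = y))" for y
  have h_code: "h (?code r) = Suc r" if "r \<in> sd_E R" for r
  proof -
    have "(THE r'. r' \<in> sd_E R \<and> ?code r' = ?code r) = r"
      using that code_inj by (intro the_equality) auto
    then show ?thesis by (simp add: h_def brandt_code_def)
  qed
  have h_zero: "h (prod_encode (x, 0)) = 0" for x by (simp add: h_def)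
  note code_mul = brandt_code_mul[OF fin_R morph, folded P_def]
  define C where "C = ?code ` sd_E R \<union> {prod_encode (x, 0) |x. x \<in> sg_car (consolidation T)}"
  have Suc_fe: "Suc (fe r) \<in> sg_car (consolidation T)" if "r \<in> sd_E R" for r
    using M(2) that by (simp add: consolidation_car)
  have C_mul: "sg_mul P x y \<in> C \<and> h (sg_mul P x y) = sg_mul (consolidation R) (h x) (h y)"
    if xy: "x \<in> C" "y \<in> C" for x y
  proof (cases "x \<in> ?code ` sd_E R \<and> y \<in> ?code ` sd_E R")
    case True
    then obtain r r' where "r \<in> sd_E R" "r' \<in> sd_E R" "x = ?code r" "y = ?code r'" by auto
    then show ?thesis
      using code_mul F(5) h_code h_zero consolidation_closed[OF fin_T Suc_fe Suc_fe] by (auto simp: C_def)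
  next
    case False
    then obtain x1 x2 y1 y2 where "x = prod_encode (x1, x2)" "y = prod_encode (y1, y2)"
      "x1 \<in> sg_car (consolidation T)" "y1 \<in> sg_car (consolidation T)" "x2 = 0 \<or> y2 = 0"
      using xy Suc_fe by (auto simp: C_def brandt_code_def)
    then show ?thesis using consolidation_closed[OF fin_T] h_zero by (auto simp: C_def P_def)
  qed
  show ?thesis
  proof (rule pv_sg_image_of_subsemigroup[OF pv P, where C = C and h = h])
    show "C \<subseteq> sg_car P" using M(2) F(3,4) by (auto simp: C_def P_def brandt_code_def consolidation_car)
    show "C \<noteq> {}" using zero_in_consolidation[of T] unfolding C_def by blast
    show "\<forall>x\<in>C. \<forall>y\<in>C. sg_mul P x y \<in> C"
      "\<forall>x\<in>C. \<forall>y\<in>C. h (sg_mul P x y) = sg_mul (consolidation R) (h x) (h y)"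
      using C_mul by blast+
    show "h ` C = sg_car (consolidation R)"
    proof (rule consolidation_car_eqI)
      show "h ` C \<subseteq> sg_car (consolidation R)" using h_code h_zero by (auto simp: C_def consolidation_car)
      show "0 \<in> h ` C" using h_zero by (intro image_eqI[where x = "prod_encode (0, 0)"]) (auto simp: C_def)
      show "Suc r \<in> h ` C" if "r \<in> sd_E R" for r
        using that h_code by (intro image_eqI[where x = "?code r"]) (auto simp: C_def)
    qed
  qed
qed

text \<open>Bijectivity on vertices is what makes the quotient map a homomorphism of consolidations:
  it maps undefined products (which are zero) to undefined products.\<close>
lemma consolidation_quotient:
  assumes pv: "pv_sg V" and fin_R: "fin_sgd R" and R: "consolidation R \<in> V"
    and morph: "sgd_morph R S qv qe" and bij: "bij_betw qv (sd_V R) (sd_V S)" and onto: "qe ` sd_E R = sd_E S"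
  shows "consolidation S \<in> V"
proof -
  note M = sgd_morphD[OF morph] and F = fin_sgdD[OF fin_R]
  have inj: "inj_on qv (sd_V R)" using bij by (simp add: bij_betw_def)
  define h where "h y = (if y = 0 then 0 else Suc (qe (y - 1)))" for y
  show ?thesis
  proof (rule pv_sg_image_of_subsemigroup[OF pv R, where C = "sg_car (consolidation R)" and h = h])
    show "sg_car (consolidation R) \<subseteq> sg_car (consolidation R)" "sg_car (consolidation R) \<noteq> {}"
      using zero_in_consolidation by blast+
    show "\<forall>a\<in>sg_car (consolidation R). \<forall>b\<in>sg_car (consolidation R). sg_mul (consolidation R) a b \<in> sg_car (consolidation R)"
      using consolidation_closed[OF fin_R] by auto
    show "h ` sg_car (consolidation R) = sg_car (consolidation S)"
    proof (rule consolidation_car_eqI)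
      show "h ` sg_car (consolidation R) \<subseteq> sg_car (consolidation S)"
        using onto by (auto simp: h_def consolidation_car)
      show "0 \<in> h ` sg_car (consolidation R)" by (intro image_eqI[where x = 0]) (auto simp: h_def)
      fix s assume "s \<in> sd_E S"
      then obtain r where "r \<in> sd_E R" "s = qe r" using onto by auto
      then show "Suc s \<in> h ` sg_car (consolidation R)"
        by (intro image_eqI[where x = "Suc r"]) (auto simp: h_def consolidation_car)
    qed
    show "\<forall>x\<in>sg_car (consolidation R). \<forall>y\<in>sg_car (consolidation R).
        h (sg_mul (consolidation R) x y) = sg_mul (consolidation S) (h x) (h y)"
    proof (intro ballI)
      fix x y assume "x \<in> sg_car (consolidation R)" "y \<in> sg_car (consolidation R)"
      then consider "x = 0" | "y = 0" | r r' where "r \<in> sd_E R" "r' \<in> sd_E R" "x = Suc r" "y = Suc r'"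
        by (auto simp: consolidation_car)
      then show "h (sg_mul (consolidation R) x y) = sg_mul (consolidation S) (h x) (h y)"
      proof cases
        case (3 r r')
        show ?thesis
        proof (cases "sd_src R r = sd_tgt R r'")
          case True
          then show ?thesis using 3 M(3,4,5) by (simp add: h_def)
        next
          case False
          then have "qv (sd_src R r) \<noteq> qv (sd_tgt R r')" using inj F(3,4) 3 by (meson inj_onD)
          then show ?thesis using 3 M(3,4) False by (simp add: h_def)
        qed
      qed (simp_all add: h_def)
    qed
  qed
qed

lemma fin_sgd_sg_as_sgd: "fin_sg S \<Longrightarrow> fin_sgd (sg_as_sgd S)"
  unfolding fin_sgd_def fin_sg_def sg_as_sgd_def by simp

lemma gV_divisor:
  assumes "T \<in> gV V" "fin_sgd S" "sgd_divides S T" shows "S \<in> gV V"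
  using assms pv_sgd_def[THEN iffD1, THEN conjunct2, THEN conjunct1] unfolding gV_def by blast

lemma gV_prod:
  assumes "S \<in> gV V" "T \<in> gV V" shows "sgd_prod S T \<in> gV V"
  using assms pv_sgd_def[THEN iffD1, THEN conjunct2, THEN conjunct2, THEN conjunct1] unfolding gV_def by blast

lemma gV_sg_as_sgd: "S \<in> V \<Longrightarrow> sg_as_sgd S \<in> gV V"
  unfolding gV_def by blast

lemma gV_consolidation:
  assumes pv: "pv_sg V" and B2: "B2 \<in> V" and S: "S \<in> gV V"
  shows "fin_sgd S \<and> consolidation S \<in> V"
proof -
  define D where "D = {S. fin_sgd S \<and> consolidation S \<in> V}"
  have "pv_sgd D"
    unfolding pv_sgd_def
  proof (intro conjI allI ballI impI)
    fix S T assume ST: "T \<in> D \<and> fin_sgd S \<and> sgd_divides S T"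
    then obtain R qv qe fv fe where R: "fin_sgd R" "sgd_morph R S qv qe" "bij_betw qv (sd_V R) (sd_V S)"
      "qe ` sd_E R = sd_E S" "sgd_morph R T fv fe"
      "\<forall>r\<in>sd_E R. \<forall>r'\<in>sd_E R. sd_src R r = sd_src R r' \<and> sd_tgt R r = sd_tgt R r' \<and> fe r = fe r' \<longrightarrow> r = r'"
      unfolding sgd_divides_def by blast
    have "consolidation R \<in> V"
      using consolidation_faithful[OF pv B2 R(1) _ _ R(5,6)] ST unfolding D_def by simp
    then show "S \<in> D" using consolidation_quotient[OF pv R(1) _ R(2,3,4)] ST unfolding D_def by simp
  next
    fix S T assume "S \<in> D" "T \<in> D"
    then show "sgd_prod S T \<in> D" "sgd_coprod S T \<in> D"
      unfolding D_def using consolidation_sgd_prod[OF pv] consolidation_sgd_coprod[OF pv]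
        fin_sgd_prod fin_sgd_coprod by simp_all
  qed (simp add: D_def)
  moreover have "sg_as_sgd ` V \<subseteq> D"
    unfolding D_def using consolidation_sg_as_sgd[OF pv _ B2] fin_sgd_sg_as_sgd pv_sg_fin[OF pv] by auto
  ultimately have "S \<in> D" using S unfolding gV_def by blast
  then show ?thesis unfolding D_def by simp
qed

section \<open>Indices of the free pro-\<open>gV\<close> semigroupoid\<close>

abbreviation coord :: "('v, 'e) fedge \<Rightarrow> ('v, 'e) sidx \<Rightarrow> nat" where
  "coord x \<equiv> snd (snd x)"

abbreviation vlab :: "('v, 'e) sidx \<Rightarrow> 'v \<Rightarrow> nat" where
  "vlab j \<equiv> fst (snd j)"

abbreviation elab :: "('v, 'e) sidx \<Rightarrow> 'e \<Rightarrow> nat" where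
  "elab j \<equiv> snd (snd j)"

lemma EdgesG_iff: "(u, v, \<pi>) \<in> EdgesG C A \<longleftrightarrow> u \<in> gverts A \<and> v \<in> gverts A \<and>
      \<pi> \<in> PiE (idxG C A) (\<lambda>i. sd_E (fst i)) \<and>
      (\<forall>S \<phi>v \<phi>e. (S, \<phi>v, \<phi>e) \<in> idxG C A \<longrightarrow>
          sd_src S (\<pi> (S, \<phi>v, \<phi>e)) = \<phi>v u \<and> sd_tgt S (\<pi> (S, \<phi>v, \<phi>e)) = \<phi>v v) \<and>
      (\<forall>S \<phi>v \<phi>e T \<psi>v \<psi>e hv he. (S, \<phi>v, \<phi>e) \<in> idxG C A \<and> (T, \<psi>v, \<psi>e) \<in> idxG C A \<and>
          sgd_morph S T hv he \<and> (\<forall>x\<in>gverts A. hv (\<phi>v x) = \<psi>v x) \<and>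
          (\<forall>e\<in>gedges A. he (\<phi>e e) = \<psi>e e) \<longrightarrow>
          he (\<pi> (S, \<phi>v, \<phi>e)) = \<pi> (T, \<psi>v, \<psi>e))"
  unfolding EdgesG_def by simp

lemma idxG_iff: "(S, \<phi>v, \<phi>e) \<in> idxG C A \<longleftrightarrow> S \<in> C \<and> \<phi>v \<in> PiE (gverts A) (\<lambda>_. sd_V S) \<and>
      \<phi>e \<in> PiE (gedges A) (\<lambda>_. sd_E S) \<and>
      (\<forall>e\<in>gedges A. sd_src S (\<phi>e e) = \<phi>v (gsrc A e) \<and> sd_tgt S (\<phi>e e) = \<phi>v (gtgt A e))"
  unfolding idxG_def by simp

lemma idxGD:
  assumes "j \<in> idxG C A"
  shows "fst j \<in> C" "vlab j \<in> PiE (gverts A) (\<lambda>_. sd_V (fst j))"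
    "elab j \<in> PiE (gedges A) (\<lambda>_. sd_E (fst j))"
    "\<And>e. e \<in> gedges A \<Longrightarrow> sd_src (fst j) (elab j e) = vlab j (gsrc A e)"
    "\<And>e. e \<in> gedges A \<Longrightarrow> sd_tgt (fst j) (elab j e) = vlab j (gtgt A e)"
  using assms by (cases j; auto simp: idxG_iff)+

lemma idxV_iff: "(S, \<phi>) \<in> idxV V X \<longleftrightarrow> S \<in> V \<and> \<phi> \<in> PiE X (\<lambda>_. sg_car S)"
  unfolding idxV_def by simp

lemma OmegaV_iff: "\<pi> \<in> OmegaV V X \<longleftrightarrow> \<pi> \<in> PiE (idxV V X) (\<lambda>i. sg_car (fst i)) \<and>
     (\<forall>S \<phi> T \<psi> h. (S, \<phi>) \<in> idxV V X \<and> (T, \<psi>) \<in> idxV V X \<and> sg_hom S T h \<and>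
        (\<forall>x\<in>X. h (\<phi> x) = \<psi> x) \<longrightarrow> h (\<pi> (S, \<phi>)) = \<pi> (T, \<psi>))"
  unfolding OmegaV_def by simp

lemma OmegaV_compat:
  assumes "a \<in> OmegaV V X" "(S, \<phi>) \<in> idxV V X" "(T, \<psi>) \<in> idxV V X" "sg_hom S T h"
    "\<forall>x\<in>X. h (\<phi> x) = \<psi> x"
  shows "h (a (S, \<phi>)) = a (T, \<psi>)"
  using assms unfolding OmegaV_iff by blast

lemma OmegaV_val: "a \<in> OmegaV V X \<Longrightarrow> i \<in> idxV V X \<Longrightarrow> a i \<in> sg_car (fst i)"
  unfolding OmegaV_iff by (auto simp: PiE_iff)

lemma OmegaV_extensional: "a \<in> OmegaV V X \<Longrightarrow> a \<in> extensional (idxV V X)"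
  unfolding OmegaV_iff by (auto simp: PiE_iff)

definition idx_morph :: "('v, 'e) graph \<Rightarrow> ('v, 'e) sidx \<Rightarrow> ('v, 'e) sidx \<Rightarrow>
    (nat \<Rightarrow> nat) \<Rightarrow> (nat \<Rightarrow> nat) \<Rightarrow> bool" where
  "idx_morph A j i hv he \<longleftrightarrow> sgd_morph (fst j) (fst i) hv he \<and>
     (\<forall>x\<in>gverts A. hv (vlab j x) = vlab i x) \<and> (\<forall>e\<in>gedges A. he (elab j e) = elab i e)"

lemma EdgesG_coord_morph:
  assumes "x \<in> EdgesG C A" "j \<in> idxG C A" "i \<in> idxG C A" "idx_morph A j i hv he"
  shows "he (coord x j) = coord x i"
proof -
  obtain u v \<pi> where x: "x = (u, v, \<pi>)" by (cases x)
  obtain S \<phi>v \<phi>e where j: "j = (S, \<phi>v, \<phi>e)" by (cases j)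
  obtain T \<psi>v \<psi>e where i: "i = (T, \<psi>v, \<psi>e)" by (cases i)
  show ?thesis using assms unfolding x j i EdgesG_iff idx_morph_def by auto
qed

lemma EdgesG_coord:
  assumes "x \<in> EdgesG C A" "j \<in> idxG C A"
  shows "coord x j \<in> sd_E (fst j)" "sd_src (fst j) (coord x j) = vlab j (e_src x)"
    "sd_tgt (fst j) (coord x j) = vlab j (e_tgt x)"
proof -
  obtain u v \<pi> where x: "x = (u, v, \<pi>)" by (cases x)
  obtain S \<phi>v \<phi>e where j: "j = (S, \<phi>v, \<phi>e)" by (cases j)
  show "coord x j \<in> sd_E (fst j)" "sd_src (fst j) (coord x j) = vlab j (e_src x)"
    "sd_tgt (fst j) (coord x j) = vlab j (e_tgt x)"
    using assms unfolding x j EdgesG_iff e_src_def e_tgt_def by (auto simp: PiE_iff)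
qed

lemma EdgesG_verts: "x \<in> EdgesG C A \<Longrightarrow> e_src x \<in> gverts A \<and> e_tgt x \<in> gverts A"
  by (cases x) (simp add: EdgesG_iff e_src_def e_tgt_def)

lemma EdgesG_coord_PiE: "x \<in> EdgesG C A \<Longrightarrow> coord x \<in> PiE (idxG C A) (\<lambda>i. sd_E (fst i))"
  by (cases x) (simp add: EdgesG_iff)

lemma EdgesG_eqI:
  assumes "x \<in> EdgesG C A" "e_src y = e_src x" "e_tgt y = e_tgt x"
    "coord y \<in> extensional (idxG C A)" "\<And>j. j \<in> idxG C A \<Longrightarrow> coord y j = coord x j"
  shows "y = x"
  using assms EdgesG_coord_PiE[OF assms(1)] extensionalityI[of "coord y" "idxG C A" "coord x"]
  by (cases x, cases y) (auto simp: e_src_def e_tgt_def PiE_iff)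

lemma sgd_morph_comp:
  assumes "sgd_morph S T hv he" "sgd_morph T U hv' he'"
  shows "sgd_morph S U (hv' \<circ> hv) (he' \<circ> he)"
proof -
  note M1 = sgd_morphD[OF assms(1)] and M2 = sgd_morphD[OF assms(2)]
  show ?thesis unfolding sgd_morph_def
  proof (intro conjI ballI impI)
    show "hv' \<circ> hv \<in> sd_V S \<rightarrow> sd_V U" "he' \<circ> he \<in> sd_E S \<rightarrow> sd_E U"
      using M1(1,2) M2(1,2) by auto
  next
    fix s assume s: "s \<in> sd_E S"
    show "sd_src U ((he' \<circ> he) s) = (hv' \<circ> hv) (sd_src S s)" using s M1(2,3) M2(3) by simp
    show "sd_tgt U ((he' \<circ> he) s) = (hv' \<circ> hv) (sd_tgt S s)" using s M1(2,4) M2(4) by simp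
  next
    fix s t assume st: "s \<in> sd_E S" "t \<in> sd_E S" "sd_src S s = sd_tgt S t"
    then have "sd_src T (he s) = sd_tgt T (he t)" using M1(3,4) by simp
    then show "(he' \<circ> he) (sd_mul S s t) = sd_mul U ((he' \<circ> he) s) ((he' \<circ> he) t)"
      using st M1(2,5) M2(5) by simp
  qed
qed

lemma idx_morph_comp:
  "idx_morph A j k hv he \<Longrightarrow> idx_morph A k i hv' he' \<Longrightarrow> idx_morph A j i (hv' \<circ> hv) (he' \<circ> he)"
  unfolding idx_morph_def using sgd_morph_comp by auto

lemma sgd_morph_id: "fin_sgd S \<Longrightarrow> sgd_morph S S id id"
  unfolding sgd_morph_def using fin_sgdD by auto

lemma sgd_morph_fst:
  "fin_sgd S \<Longrightarrow> fin_sgd T \<Longrightarrow> sgd_morph (sgd_prod S T) S (\<lambda>n. fst (prod_decode n)) (\<lambda>n. fst (prod_decode n))"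
  unfolding sgd_morph_def by auto

lemma sgd_morph_snd:
  "fin_sgd S \<Longrightarrow> fin_sgd T \<Longrightarrow> sgd_morph (sgd_prod S T) T (\<lambda>n. snd (prod_decode n)) (\<lambda>n. snd (prod_decode n))"
  unfolding sgd_morph_def by auto

definition idx_prod :: "('v, 'e) graph \<Rightarrow> ('v, 'e) sidx \<Rightarrow> ('v, 'e) sidx \<Rightarrow> ('v, 'e) sidx" where
  "idx_prod A j i = (sgd_prod (fst j) (fst i),
      restrict (\<lambda>v. prod_encode (vlab j v, vlab i v)) (gverts A),
      restrict (\<lambda>e. prod_encode (elab j e, elab i e)) (gedges A))"

lemma idx_prod_in:
  assumes "is_graph A" "j \<in> idxG (gV V) A" "i \<in> idxG (gV V) A"
  shows "idx_prod A j i \<in> idxG (gV V) A"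
  using assms idxGD[OF assms(2)] idxGD[OF assms(3)] gV_prod[of "fst j" V "fst i"]
  unfolding idx_prod_def idxG_iff is_graph_def by (auto simp: PiE_iff)

lemma idx_morph_fst:
  "fin_sgd (fst j) \<Longrightarrow> fin_sgd (fst i) \<Longrightarrow>
    idx_morph A (idx_prod A j i) j (\<lambda>n. fst (prod_decode n)) (\<lambda>n. fst (prod_decode n))"
  unfolding idx_morph_def idx_prod_def using sgd_morph_fst by simp

lemma idx_morph_snd:
  "fin_sgd (fst j) \<Longrightarrow> fin_sgd (fst i) \<Longrightarrow>
    idx_morph A (idx_prod A j i) i (\<lambda>n. snd (prod_decode n)) (\<lambda>n. snd (prod_decode n))"
  unfolding idx_morph_def idx_prod_def using sgd_morph_snd by simp

lemma gV_fin_sgd: "pv_sg V \<Longrightarrow> B2 \<in> V \<Longrightarrow> j \<in> idxG (gV V) A \<Longrightarrow> fin_sgd (fst j)"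
  using gV_consolidation idxGD(1) by blast

lemma idxG_directed:
  assumes pv: "pv_sg V" and B2: "B2 \<in> V" and graph: "is_graph A"
    and "finite F" "F \<noteq> {}" "F \<subseteq> idxG (gV V) A"
  shows "\<exists>j0\<in>idxG (gV V) A. \<forall>i\<in>F. \<exists>hv he. idx_morph A j0 i hv he"
  using assms(4-6)
proof (induction F rule: finite_ne_induct)
  case (singleton i)
  then have "idx_morph A i i id id"
    unfolding idx_morph_def using sgd_morph_id[OF gV_fin_sgd[OF pv B2]] by simp
  then show ?case using singleton by blast
next
  case (insert i F)
  then obtain j0 where j0: "j0 \<in> idxG (gV V) A" "\<forall>k\<in>F. \<exists>hv he. idx_morph A j0 k hv he" by auto
  have i: "i \<in> idxG (gV V) A" using insert by auto
  note fin = gV_fin_sgd[OF pv B2 j0(1)] gV_fin_sgd[OF pv B2 i]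
  have "\<exists>hv he. idx_morph A (idx_prod A j0 i) k hv he" if "k \<in> insert i F" for k
    using that idx_morph_snd[OF fin] idx_morph_comp[OF idx_morph_fst[OF fin]] j0(2) by blast
  then show ?case using idx_prod_in[OF graph j0(1) i] by blast
qed

definition vertex_code :: "('v, 'e) graph \<Rightarrow> 'v \<Rightarrow> nat" where
  "vertex_code A = to_nat_on (gverts A)"

lemma inj_vertex_code: "finite (gverts A) \<Longrightarrow> inj_on (vertex_code A) (gverts A)"
  unfolding vertex_code_def by (intro inj_on_to_nat_on countable_finite)

text \<open>The coordinate of an edge at this index records its endpoints.\<close>
definition complete_idx :: "('v, 'e) graph \<Rightarrow> ('v, 'e) sidx" where
  "complete_idx A = (complete_sgd (vertex_code A ` gverts A), restrict (vertex_code A) (gverts A),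
     restrict (\<lambda>e. prod_encode (vertex_code A (gtgt A e), vertex_code A (gsrc A e))) (gedges A))"

definition consolidation_idx :: "('v, 'e) graph \<Rightarrow> ('v, 'e) sidx \<Rightarrow> fsg \<times> ('e \<Rightarrow> nat)" where
  "consolidation_idx A j = (consolidation (fst j), restrict (\<lambda>e. Suc (elab j e)) (gedges A))"

lemma complete_sgd_divides_B2: "finite P \<Longrightarrow> sgd_divides (complete_sgd P) (sg_as_sgd B2)"
  unfolding sgd_divides_def
proof (intro exI conjI)
  assume "finite P"
  then show "fin_sgd (complete_sgd P)" "sgd_morph (complete_sgd P) (complete_sgd P) id id"
    using fin_sgd_complete_sgd sgd_morph_id by blast+
  show "sgd_morph (complete_sgd P) (sg_as_sgd B2) (\<lambda>_. 0) (\<lambda>_. 0)"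
    unfolding sgd_morph_def sg_as_sgd_def by (simp add: B2_car B2_mul)
qed auto

lemma complete_sgd_in_gV: "B2 \<in> V \<Longrightarrow> finite P \<Longrightarrow> complete_sgd P \<in> gV V"
  using gV_divisor gV_sg_as_sgd fin_sgd_complete_sgd complete_sgd_divides_B2 by blast

lemma EdgesG_coord_complete_idx:
  assumes "x \<in> EdgesG C A" "complete_idx A \<in> idxG C A"
  shows "coord x (complete_idx A) = prod_encode (vertex_code A (e_tgt x), vertex_code A (e_src x))"
proof -
  note E = EdgesG_coord[OF assms]
  obtain p q where "coord x (complete_idx A) = prod_encode (p, q)" using E(1) by (auto simp: complete_idx_def)
  then show ?thesis using E(2,3) EdgesG_verts[OF assms(1)] by (simp add: complete_idx_def)
qed

lemma genG_in: "is_graph A \<Longrightarrow> e \<in> gedges A \<Longrightarrow> genG C A e \<in> EdgesG C A"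
  unfolding genG_def EdgesG_iff is_graph_def by (auto simp: PiE_iff idxG_iff)

lemma genG_simps:
  "e_src (genG C A e) = gsrc A e" "e_tgt (genG C A e) = gtgt A e"
  "j \<in> idxG C A \<Longrightarrow> coord (genG C A e) j = elab j e"
  unfolding genG_def e_src_def e_tgt_def by auto

lemma mulG_simps:
  "e_src (mulG C A x y) = e_src y" "e_tgt (mulG C A x y) = e_tgt x"
  "j \<in> idxG C A \<Longrightarrow> coord (mulG C A x y) j = sd_mul (fst j) (coord x j) (coord y j)"
  unfolding mulG_def e_src_def e_tgt_def by auto

lemma topG_space: "topspace (topG C A) = EdgesG C A"
proof -
  have "EdgesG C A \<subseteq> topspace (prod_topology (discrete_topology (gverts A))
       (prod_topology (discrete_topology (gverts A))
         (product_topology (\<lambda>i. discrete_topology (sd_E (fst i))) (idxG C A))))"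
    by (auto simp: EdgesG_def)
  then show ?thesis unfolding topG_def by auto
qed

lemma topV_space: "topspace (topV V X) = OmegaV V X"
  unfolding topV_def OmegaV_def by auto

section \<open>Density of finite paths\<close>

inductive_set gen_paths :: "fsgd set \<Rightarrow> ('v, 'e) graph \<Rightarrow> ('v, 'e) fedge set" for C A where
  gen: "e \<in> gedges A \<Longrightarrow> genG C A e \<in> gen_paths C A"
| mul: "x \<in> gen_paths C A \<Longrightarrow> y \<in> gen_paths C A \<Longrightarrow> e_src x = e_tgt y \<Longrightarrow> mulG C A x y \<in> gen_paths C A"

inductive path_value :: "fsgd \<Rightarrow> ('e \<Rightarrow> nat) \<Rightarrow> ('v, 'e) graph \<Rightarrow> nat \<Rightarrow> 'v \<Rightarrow> 'v \<Rightarrow> bool"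
  for S \<phi> A where
  gen: "e \<in> gedges A \<Longrightarrow> path_value S \<phi> A (\<phi> e) (gsrc A e) (gtgt A e)"
| mul: "path_value S \<phi> A s a b \<Longrightarrow> path_value S \<phi> A t c a \<Longrightarrow> path_value S \<phi> A (sd_mul S s t) c b"

definition path_idx :: "('v, 'e) graph \<Rightarrow> ('v, 'e) sidx \<Rightarrow> ('v, 'e) sidx" where
  "path_idx A j = ((fst j)\<lparr>sd_E := {s. \<exists>a b. path_value (fst j) (elab j) A s a b}\<rparr>, vlab j, elab j)"

locale finite_graph_pv =
  fixes A :: "('v, 'e) graph" and V :: "fsg set"
  assumes graph: "is_graph A" and finite_verts: "finite (gverts A)"
    and pv: "pv_sg V" and B2: "B2 \<in> V"
begin

lemma inj_code: "inj_on (vertex_code A) (gverts A)"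
  by (rule inj_vertex_code[OF finite_verts])

lemma fin_sgd_idx: "j \<in> idxG (gV V) A \<Longrightarrow> fin_sgd (fst j)"
  by (rule gV_fin_sgd[OF pv B2])

lemma complete_idx_in: "complete_idx A \<in> idxG (gV V) A"
  using complete_sgd_in_gV[OF B2] finite_verts graph
  unfolding complete_idx_def idxG_iff is_graph_def by (auto simp: PiE_iff)

lemma consolidation_idx_in:
  assumes "j \<in> idxG (gV V) A" shows "consolidation_idx A j \<in> idxV V (gedges A)"
  using gV_consolidation[OF pv B2 idxGD(1)[OF assms]] idxGD(3)[OF assms]
  unfolding consolidation_idx_def idxV_iff by (auto simp: PiE_iff consolidation_car)

lemma mulG_in:
  assumes x: "x \<in> EdgesG (gV V) A" and y: "y \<in> EdgesG (gV V) A" and xy: "e_src x = e_tgt y"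
  shows "mulG (gV V) A x y \<in> EdgesG (gV V) A"
proof -
  have composable: "sd_src (fst j) (coord x j) = sd_tgt (fst j) (coord y j)" if "j \<in> idxG (gV V) A" for j
    using EdgesG_coord[OF x that] EdgesG_coord[OF y that] xy by simp
  have in_E: "sd_mul (fst j) (coord x j) (coord y j) \<in> sd_E (fst j)" if "j \<in> idxG (gV V) A" for j
    using fin_sgdD(5)[OF fin_sgd_idx] EdgesG_coord(1)[OF x] EdgesG_coord(1)[OF y] composable that by blast
  show ?thesis
    unfolding mulG_def EdgesG_iff
  proof (intro conjI allI impI)
    show "e_src y \<in> gverts A" "e_tgt x \<in> gverts A" using EdgesG_verts[OF y] EdgesG_verts[OF x] by auto
    show "(\<lambda>i\<in>idxG (gV V) A. sd_mul (fst i) (coord x i) (coord y i)) \<in> (\<Pi>\<^sub>E i\<in>idxG (gV V) A. sd_E (fst i))"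
      using in_E by (auto simp: PiE_iff)
  next
    fix S \<phi>v \<phi>e assume j: "(S, \<phi>v, \<phi>e) \<in> idxG (gV V) A"
    show "sd_src S ((\<lambda>i\<in>idxG (gV V) A. sd_mul (fst i) (coord x i) (coord y i)) (S, \<phi>v, \<phi>e)) = \<phi>v (e_src y)"
      "sd_tgt S ((\<lambda>i\<in>idxG (gV V) A. sd_mul (fst i) (coord x i) (coord y i)) (S, \<phi>v, \<phi>e)) = \<phi>v (e_tgt x)"
      using j EdgesG_coord[OF x j] EdgesG_coord[OF y j] fin_sgdD(6,7)[OF fin_sgd_idx[OF j]] composable[OF j]
      by auto
  next
    fix S \<phi>v \<phi>e T \<psi>v \<psi>e hv he
    assume a: "(S, \<phi>v, \<phi>e) \<in> idxG (gV V) A \<and> (T, \<psi>v, \<psi>e) \<in> idxG (gV V) A \<and>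
          sgd_morph S T hv he \<and> (\<forall>x\<in>gverts A. hv (\<phi>v x) = \<psi>v x) \<and> (\<forall>e\<in>gedges A. he (\<phi>e e) = \<psi>e e)"
    then have j: "(S, \<phi>v, \<phi>e) \<in> idxG (gV V) A" and i: "(T, \<psi>v, \<psi>e) \<in> idxG (gV V) A"
      and m: "idx_morph A (S, \<phi>v, \<phi>e) (T, \<psi>v, \<psi>e) hv he" unfolding idx_morph_def by auto
    have "he (sd_mul S (coord x (S, \<phi>v, \<phi>e)) (coord y (S, \<phi>v, \<phi>e))) =
          sd_mul T (he (coord x (S, \<phi>v, \<phi>e))) (he (coord y (S, \<phi>v, \<phi>e)))"
      using sgd_morphD(5)[of S T hv he] a EdgesG_coord(1)[OF x j] EdgesG_coord(1)[OF y j] composable[OF j]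
      by auto
    also have "\<dots> = sd_mul T (coord x (T, \<psi>v, \<psi>e)) (coord y (T, \<psi>v, \<psi>e))"
      using EdgesG_coord_morph[OF x j i m] EdgesG_coord_morph[OF y j i m] by simp
    finally show "he ((\<lambda>i\<in>idxG (gV V) A. sd_mul (fst i) (coord x i) (coord y i)) (S, \<phi>v, \<phi>e)) =
       (\<lambda>i\<in>idxG (gV V) A. sd_mul (fst i) (coord x i) (coord y i)) (T, \<psi>v, \<psi>e)"
      using i j by simp
  qed
qed

lemma gen_paths_subset: "gen_paths (gV V) A \<subseteq> EdgesG (gV V) A"
proof
  fix y assume "y \<in> gen_paths (gV V) A"
  then show "y \<in> EdgesG (gV V) A"
    by induction (auto intro: genG_in[OF graph] mulG_in)
qed

end

lemma topG_open_nbhd_coords: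
  assumes N: "openin (topG C A) N" and xN: "x \<in> N"
  obtains F where "finite F" "F \<subseteq> idxG C A"
    "\<And>y. y \<in> EdgesG C A \<Longrightarrow> e_src y = e_src x \<Longrightarrow> e_tgt y = e_tgt x \<Longrightarrow>
      (\<forall>i\<in>F. coord y i = coord x i) \<Longrightarrow> y \<in> N"
proof -
  obtain T where T: "openin (prod_topology (discrete_topology (gverts A))
       (prod_topology (discrete_topology (gverts A))
         (product_topology (\<lambda>i. discrete_topology (sd_E (fst i))) (idxG C A)))) T" "N = T \<inter> EdgesG C A"
    using N unfolding topG_def openin_subtopology by blast
  obtain u v \<pi> where x: "x = (u, v, \<pi>)" by (cases x)
  have mem: "(u, (v, \<pi>)) \<in> T" using xN T(2) x by simp
  obtain U1 W where UW: "openin (prod_topology (discrete_topology (gverts A))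
         (product_topology (\<lambda>i. discrete_topology (sd_E (fst i))) (idxG C A))) W"
      "u \<in> U1" "(v, \<pi>) \<in> W" "U1 \<times> W \<subseteq> T"
    using iffD1[OF openin_prod_topology_alt T(1), rule_format, OF mem] by (elim exE conjE) simp
  obtain U2 U3 where U23: "openin (product_topology (\<lambda>i. discrete_topology (sd_E (fst i))) (idxG C A)) U3"
      "v \<in> U2" "\<pi> \<in> U3" "U2 \<times> U3 \<subseteq> W"
    using iffD1[OF openin_prod_topology_alt UW(1), rule_format, OF UW(3)] by (elim exE conjE) simp
  obtain U where U: "finite {i \<in> idxG C A. U i \<noteq> topspace (discrete_topology (sd_E (fst i)))}"
      "\<pi> \<in> PiE (idxG C A) U" "PiE (idxG C A) U \<subseteq> U3"
    using iffD1[OF openin_product_topology_alt U23(1), rule_format, OF U23(3)] by (elim exE conjE) simp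
  define F where "F = {i \<in> idxG C A. U i \<noteq> sd_E (fst i)}"
  show ?thesis
  proof
    show "finite F" "F \<subseteq> idxG C A" using U(1) by (auto simp: F_def)
    fix y assume y: "y \<in> EdgesG C A" "e_src y = e_src x" "e_tgt y = e_tgt x" "\<forall>i\<in>F. coord y i = coord x i"
    have "coord y \<in> PiE (idxG C A) U"
      unfolding PiE_iff
    proof (intro conjI ballI)
      fix i assume i: "i \<in> idxG C A"
      show "coord y i \<in> U i"
      proof (cases "i \<in> F")
        case True
        then show ?thesis using y(4) x U(2) i by (auto simp: PiE_iff)
      next
        case False
        then show ?thesis using EdgesG_coord(1)[OF y(1) i] i by (simp add: F_def)
      qed
    qed (use EdgesG_coord_PiE[OF y(1)] in \<open>simp add: PiE_iff\<close>)
    then have "coord y \<in> U3" using U(3) by blast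
    then have "(v, coord y) \<in> W" using U23 by blast
    then have "(u, v, coord y) \<in> T" using UW by blast
    moreover have "y = (u, v, coord y)" using y(2,3) x by (cases y) (simp add: e_src_def e_tgt_def)
    ultimately show "y \<in> N" using T(2) y(1) by simp
  qed
qed

context finite_graph_pv
begin

lemma path_value_props:
  assumes j0: "j0 \<in> idxG (gV V) A" and mK: "idx_morph A j0 (complete_idx A) hvK heK"
    and p: "path_value (fst j0) (elab j0) A s a b"
  shows "s \<in> sd_E (fst j0) \<and> sd_src (fst j0) s = vlab j0 a \<and> sd_tgt (fst j0) s = vlab j0 b \<and>
         a \<in> gverts A \<and> b \<in> gverts A \<and> heK s = prod_encode (vertex_code A b, vertex_code A a)"
  using p
proof induction
  case (gen e)
  have "heK (elab j0 e) = elab (complete_idx A) e" using mK gen unfolding idx_morph_def by blast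
  then show ?case using idxGD(3,4,5)[OF j0] gen graph unfolding is_graph_def complete_idx_def
    by (auto simp: PiE_iff)
next
  case (mul s a b t c)
  note F = fin_sgdD[OF fin_sgd_idx[OF j0]]
  have M: "sgd_morph (fst j0) (fst (complete_idx A)) hvK heK" using mK unfolding idx_morph_def by blast
  have composable: "sd_src (fst j0) s = sd_tgt (fst j0) t" using mul by simp
  have "heK (sd_mul (fst j0) s t) = sd_mul (fst (complete_idx A)) (heK s) (heK t)"
    using sgd_morphD(5)[OF M] mul composable by blast
  then show ?case using mul F(5,6,7) composable unfolding complete_idx_def by simp
qed

lemma path_value_gen_path:
  assumes j0: "j0 \<in> idxG (gV V) A" and p: "path_value (fst j0) (elab j0) A s a b"
  shows "\<exists>y\<in>gen_paths (gV V) A. e_src y = a \<and> e_tgt y = b \<and> coord y j0 = s"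
  using p
proof induction
  case (gen e)
  have "genG (gV V) A e \<in> gen_paths (gV V) A" using gen_paths.gen[OF gen] .
  moreover have "e_src (genG (gV V) A e) = gsrc A e" "e_tgt (genG (gV V) A e) = gtgt A e"
    "coord (genG (gV V) A e) j0 = elab j0 e"
    by (simp_all add: genG_simps j0)
  ultimately show ?case by blast
next
  case (mul s a b t c)
  then obtain y1 y2 where y: "y1 \<in> gen_paths (gV V) A" "e_src y1 = a" "e_tgt y1 = b" "coord y1 j0 = s"
    "y2 \<in> gen_paths (gV V) A" "e_src y2 = c" "e_tgt y2 = a" "coord y2 j0 = t" by blast
  then have "mulG (gV V) A y1 y2 \<in> gen_paths (gV V) A" by (simp add: gen_paths.mul)
  moreover have "e_src (mulG (gV V) A y1 y2) = c" "e_tgt (mulG (gV V) A y1 y2) = b"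
    "coord (mulG (gV V) A y1 y2) j0 = sd_mul (fst j0) s t"
    using y by (simp_all add: mulG_simps j0)
  ultimately show ?case by blast
qed

text \<open>Through the complete index, the endpoints of a path are determined by its value; so
  composable path values compose to a path value.\<close>
lemma path_value_mul:
  assumes j0: "j0 \<in> idxG (gV V) A" and mK: "idx_morph A j0 (complete_idx A) hvK heK"
    and s: "path_value (fst j0) (elab j0) A s a b" and t: "path_value (fst j0) (elab j0) A t c a'"
    and composable: "sd_src (fst j0) s = sd_tgt (fst j0) t"
  shows "path_value (fst j0) (elab j0) A (sd_mul (fst j0) s t) c b"
proof -
  note Ps = path_value_props[OF j0 mK s] and Pt = path_value_props[OF j0 mK t]
  have M: "sgd_morph (fst j0) (fst (complete_idx A)) hvK heK" using mK unfolding idx_morph_def by simp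
  have "vertex_code A a = sd_src (fst (complete_idx A)) (heK s)" using Ps by (simp add: complete_idx_def)
  also have "\<dots> = hvK (sd_src (fst j0) s)" using sgd_morphD(3)[OF M] Ps by blast
  also have "\<dots> = sd_tgt (fst (complete_idx A)) (heK t)" using sgd_morphD(4)[OF M] Pt composable by metis
  also have "\<dots> = vertex_code A a'" using Pt by (simp add: complete_idx_def)
  finally have "a = a'" using inj_code Ps Pt by (meson inj_onD)
  then show ?thesis using path_value.mul[OF s] t by simp
qed

lemma path_idx_in:
  assumes j0: "j0 \<in> idxG (gV V) A" and mK: "idx_morph A j0 (complete_idx A) hvK heK"
  shows "path_idx A j0 \<in> idxG (gV V) A" "idx_morph A (path_idx A j0) j0 id id"
proof -
  obtain S \<phi>v \<phi>e where j0_eq: "j0 = (S, \<phi>v, \<phi>e)" by (cases j0)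
  define Sub where "Sub = S\<lparr>sd_E := {s. \<exists>a b. path_value S \<phi>e A s a b}\<rparr>"
  have path_idx_eq: "path_idx A j0 = (Sub, \<phi>v, \<phi>e)" by (simp add: path_idx_def Sub_def j0_eq)
  note F = fin_sgdD[OF fin_sgd_idx[OF j0]] and P = path_value_props[OF j0 mK]
  have Sub_E: "sd_E Sub \<subseteq> sd_E S" using P by (auto simp: Sub_def j0_eq)
  have mul_Sub: "sd_mul S s t \<in> sd_E Sub" if st: "s \<in> sd_E Sub" "t \<in> sd_E Sub" "sd_src S s = sd_tgt S t" for s t
  proof -
    obtain a b c a' where "path_value S \<phi>e A s a b" "path_value S \<phi>e A t c a'"
      using st(1,2) by (auto simp: Sub_def)
    then have "path_value S \<phi>e A (sd_mul S s t) c b"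
      using path_value_mul[OF j0 mK, unfolded j0_eq fst_conv snd_conv] st(3) by blast
    then show ?thesis by (auto simp: Sub_def)
  qed
  have fin_Sub: "fin_sgd Sub"
    unfolding fin_sgd_def using F Sub_E mul_Sub finite_subset[OF Sub_E]
    by (simp add: Sub_def j0_eq subset_iff)
  have Sub_simps: "sd_V Sub = sd_V S" "sd_src Sub = sd_src S" "sd_tgt Sub = sd_tgt S" "sd_mul Sub = sd_mul S"
    by (simp_all add: Sub_def)
  have morph_Sub: "sgd_morph Sub S id id"
    unfolding sgd_morph_def using Sub_E fin_sgdD[OF fin_Sub] by (auto simp: Sub_simps)
  have "sgd_divides Sub S"
    unfolding sgd_divides_def
    by (intro exI[of _ Sub] exI[of _ id] conjI) (auto simp: fin_Sub sgd_morph_id[OF fin_Sub] morph_Sub)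
  then have "Sub \<in> gV V" using gV_divisor[OF idxGD(1)[OF j0] fin_Sub] by (simp add: j0_eq)
  moreover have "\<phi>e e \<in> sd_E Sub" if "e \<in> gedges A" for e
    using path_value.gen[OF that, of S \<phi>e] by (auto simp: Sub_def)
  ultimately show "path_idx A j0 \<in> idxG (gV V) A"
    using idxGD[OF j0] unfolding path_idx_eq idxG_iff by (auto simp: Sub_def j0_eq PiE_iff)
  show "idx_morph A (path_idx A j0) j0 id id"
    unfolding idx_morph_def path_idx_eq using morph_Sub by (simp add: j0_eq)
qed

lemma approx_by_gen_path:
  assumes x: "x \<in> EdgesG (gV V) A" and j0: "j0 \<in> idxG (gV V) A"
    and mK: "idx_morph A j0 (complete_idx A) hvK heK"
  obtains y where "y \<in> gen_paths (gV V) A" "e_src y = e_src x" "e_tgt y = e_tgt x" "coord y j0 = coord x j0"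
proof -
  have "coord x j0 = coord x (path_idx A j0)"
    using EdgesG_coord_morph[OF x path_idx_in(1)[OF j0 mK] j0 path_idx_in(2)[OF j0 mK]] by simp
  then have "coord x j0 \<in> sd_E (fst (path_idx A j0))"
    using EdgesG_coord(1)[OF x path_idx_in(1)[OF j0 mK]] by simp
  then obtain a b where p: "path_value (fst j0) (elab j0) A (coord x j0) a b"
    by (auto simp: path_idx_def)
  note P = path_value_props[OF j0 mK p]
  have "prod_encode (vertex_code A b, vertex_code A a) = heK (coord x j0)" using P by simp
  also have "\<dots> = coord x (complete_idx A)" using EdgesG_coord_morph[OF x j0 complete_idx_in mK] .
  also have "\<dots> = prod_encode (vertex_code A (e_tgt x), vertex_code A (e_src x))"
    using EdgesG_coord_complete_idx[OF x complete_idx_in] .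
  finally have "a = e_src x" "b = e_tgt x"
    using inj_code P EdgesG_verts[OF x] by (simp_all add: inj_on_eq_iff)
  then show ?thesis using path_value_gen_path[OF j0 p] that by blast
qed

text \<open>The indices form a directed system, so approximating at a single index suffices.\<close>
lemma gen_paths_dense:
  assumes x: "x \<in> EdgesG (gV V) A" and F: "finite F" "F \<subseteq> idxG (gV V) A"
  obtains y where "y \<in> gen_paths (gV V) A" "e_src y = e_src x" "e_tgt y = e_tgt x"
    "\<forall>i\<in>F. coord y i = coord x i"
proof -
  have "\<exists>j0\<in>idxG (gV V) A. \<forall>i\<in>insert (complete_idx A) F. \<exists>hv he. idx_morph A j0 i hv he"
    using F complete_idx_in by (intro idxG_directed[OF pv B2 graph]) auto
  then obtain j0 where j0: "j0 \<in> idxG (gV V) A"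
    "\<forall>i\<in>insert (complete_idx A) F. \<exists>hv he. idx_morph A j0 i hv he"
    by blast
  then obtain hvK heK where "idx_morph A j0 (complete_idx A) hvK heK" by blast
  then obtain y where y: "y \<in> gen_paths (gV V) A" "e_src y = e_src x" "e_tgt y = e_tgt x"
    "coord y j0 = coord x j0"
    using approx_by_gen_path[OF x j0(1)] by blast
  have "coord y i = coord x i" if i: "i \<in> F" for i
  proof -
    obtain hv he where m: "idx_morph A j0 i hv he" using j0(2) i by blast
    have yE: "y \<in> EdgesG (gV V) A" using y(1) gen_paths_subset by blast
    have "coord y i = he (coord y j0)" using EdgesG_coord_morph[OF yE j0(1) _ m] F i by auto
    also have "\<dots> = coord x i" using EdgesG_coord_morph[OF x j0(1) _ m] F i y(4) by auto
    finally show ?thesis .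
  qed
  then show ?thesis using that y by blast
qed

end

section \<open>Values of the free pro-\<open>V\<close> semigroup at consolidated indices\<close>

lemma sg_hom_fst: "sg_hom (sg_prod S T) S (\<lambda>n. fst (prod_decode n))"
  unfolding sg_hom_def by auto

lemma sg_hom_snd: "sg_hom (sg_prod S T) T (\<lambda>n. snd (prod_decode n))"
  unfolding sg_hom_def by auto

lemma sg_hom_inclusion: "C \<subseteq> sg_car S \<Longrightarrow> sg_hom \<lparr>sg_car = C, sg_mul = sg_mul S\<rparr> S id"
  unfolding sg_hom_def by auto

text \<open>The subsemigroup, labelled by the pairs of generator values, is itself an index;
  compatibility along its inclusion into the product and along the two projections does the rest.\<close>
lemma OmegaV_pair_in_subsemigroup:
  assumes pv: "pv_sg V" and a: "a \<in> OmegaV V X" and i: "i \<in> idxV V X" and k: "k \<in> idxV V X"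
    and W: "W \<subseteq> sg_car (sg_prod (fst i) (fst k))" "W \<noteq> {}"
      "\<forall>x\<in>W. \<forall>y\<in>W. sg_mul (sg_prod (fst i) (fst k)) x y \<in> W"
    and gens: "\<forall>e\<in>X. prod_encode (snd i e, snd k e) \<in> W"
  shows "prod_encode (a i, a k) \<in> W"
proof -
  obtain S \<phi> T \<psi> where ik: "i = (S, \<phi>)" "k = (T, \<psi>)" by (cases i, cases k)
  have S: "S \<in> V" "\<phi> \<in> PiE X (\<lambda>_. sg_car S)" and T: "T \<in> V" "\<psi> \<in> PiE X (\<lambda>_. sg_car T)"
    using i k by (simp_all add: ik idxV_iff)
  define P where "P = sg_prod S T"
  define lab where "lab = restrict (\<lambda>e. prod_encode (\<phi> e, \<psi> e)) X"
  have P: "P \<in> V" unfolding P_def by (rule pv_sg_prod[OF pv S(1) T(1)])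
  have W': "W \<subseteq> sg_car P" "\<forall>x\<in>W. \<forall>y\<in>W. sg_mul P x y \<in> W" using W by (simp_all add: P_def ik)
  have gens': "lab e \<in> W" if "e \<in> X" for e using gens that by (simp add: lab_def ik)
  define Wsg where "Wsg = \<lparr>sg_car = W, sg_mul = sg_mul P\<rparr>"
  have idx_W: "(Wsg, lab) \<in> idxV V X"
    using pv_sg_subsemigroup[OF pv P W'(1) W(2) W'(2)] gens' by (auto simp: idxV_iff Wsg_def lab_def)
  have idx_P: "(P, lab) \<in> idxV V X"
    using P gens' W'(1) by (auto simp: idxV_iff lab_def)
  have "id (a (Wsg, lab)) = a (P, lab)"
    by (rule OmegaV_compat[OF a idx_W idx_P]) (simp_all add: Wsg_def sg_hom_inclusion[OF W'(1), unfolded id_def])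
  then have a_P: "a (P, lab) \<in> W" using OmegaV_val[OF a idx_W] by (simp add: Wsg_def)
  have "fst (prod_decode (a (P, lab))) = a (S, \<phi>)"
    using OmegaV_compat[OF a idx_P i[unfolded ik(1)] sg_hom_fst[of S T, folded P_def]] S(2)
    by (auto simp: lab_def PiE_iff)
  moreover have "snd (prod_decode (a (P, lab))) = a (T, \<psi>)"
    using OmegaV_compat[OF a idx_P k[unfolded ik(2)] sg_hom_snd[of S T, folded P_def]] T(2)
    by (auto simp: lab_def PiE_iff)
  ultimately have "a (P, lab) = prod_encode (a i, a k)" using ik by (metis prod.collapse prod_decode_inverse)
  then show ?thesis using a_P by simp
qed

text \<open>An edge of \<open>S\<close> paired with its endpoints, read off through the vertex labelling
  \<open>\<phi>\<close>, in the consolidated complete semigroupoid; and the pairs with zero second component.\<close>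
definition endpoint_pairs :: "('v, 'e) graph \<Rightarrow> fsgd \<Rightarrow> ('v \<Rightarrow> nat) \<Rightarrow> nat set" where
  "endpoint_pairs A S \<phi> =
     {prod_encode (Suc s, Suc (prod_encode (vertex_code A p, vertex_code A q))) |s p q.
        s \<in> sd_E S \<and> p \<in> gverts A \<and> q \<in> gverts A \<and> sd_src S s = \<phi> q \<and> sd_tgt S s = \<phi> p}
     \<union> {prod_encode (x, 0) |x. x \<in> sg_car (consolidation S)}"

text \<open>The graph of the morphism of consolidations induced by \<open>he\<close>, together with all pairs
  having a zero component.\<close>
definition consolidation_graph :: "fsgd \<Rightarrow> fsgd \<Rightarrow> (nat \<Rightarrow> nat) \<Rightarrow> nat set" where
  "consolidation_graph S T he = {prod_encode (Suc s, Suc (he s)) |s. s \<in> sd_E S}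
     \<union> {prod_encode (x, y) |x y. x \<in> sg_car (consolidation S) \<and> y \<in> sg_car (consolidation T) \<and> (x = 0 \<or> y = 0)}"

lemma consolidation_graph_mul_closed:
  assumes fin_S: "fin_sgd S" and fin_T: "fin_sgd T" and M: "sgd_morph S T hv he"
    and x: "x \<in> consolidation_graph S T he" and y: "y \<in> consolidation_graph S T he"
  shows "sg_mul (sg_prod (consolidation S) (consolidation T)) x y \<in> consolidation_graph S T he"
proof -
  note Mo = sgd_morphD[OF M] and F = fin_sgdD[OF fin_S]
  have "x \<in> sg_car (sg_prod (consolidation S) (consolidation T))"
    "y \<in> sg_car (sg_prod (consolidation S) (consolidation T))"
    using x y Mo(2) unfolding consolidation_graph_def by (auto simp: consolidation_car)
  then obtain x1 x2 y1 y2 where xy: "x = prod_encode (x1, x2)" "y = prod_encode (y1, y2)"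
      "x1 \<in> sg_car (consolidation S)" "y1 \<in> sg_car (consolidation S)"
      "x2 \<in> sg_car (consolidation T)" "y2 \<in> sg_car (consolidation T)"
    by auto
  have closed: "sg_mul (consolidation S) x1 y1 \<in> sg_car (consolidation S)"
      "sg_mul (consolidation T) x2 y2 \<in> sg_car (consolidation T)"
    using consolidation_closed[OF fin_S xy(3,4)] consolidation_closed[OF fin_T xy(5,6)] by auto
  show ?thesis
  proof (cases "x1 = 0 \<or> x2 = 0 \<or> y1 = 0 \<or> y2 = 0")
    case True
    then show ?thesis using xy closed unfolding consolidation_graph_def by auto
  next
    case False
    then obtain r r' where rr: "r \<in> sd_E S" "r' \<in> sd_E S"
        "x = prod_encode (Suc r, Suc (he r))" "y = prod_encode (Suc r', Suc (he r'))"
      using x y xy unfolding consolidation_graph_def by auto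
    show ?thesis
    proof (cases "sd_src S r = sd_tgt S r'")
      case True
      then have "sd_src T (he r) = sd_tgt T (he r')" using Mo(3,4) rr by simp
      then show ?thesis using rr True Mo(5) F(5) unfolding consolidation_graph_def by auto
    next
      case False
      then show ?thesis using rr closed xy unfolding consolidation_graph_def by auto
    qed
  qed
qed

context finite_graph_pv
begin

abbreviation endpoints_idx :: "fsg \<times> ('e \<Rightarrow> nat)" where
  "endpoints_idx \<equiv> consolidation_idx A (complete_idx A)"

lemma consolidation_complete_idx_mul:
  assumes "q1 \<in> gverts A" "p2 \<in> gverts A"
  shows "sg_mul (consolidation (fst (complete_idx A)))
      (Suc (prod_encode (vertex_code A p1, vertex_code A q1))) (Suc (prod_encode (vertex_code A p2, vertex_code A q2)))
    = (if q1 = p2 then Suc (prod_encode (vertex_code A p1, vertex_code A q2)) else 0)"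
  using inj_onD[OF inj_code _ assms] by (auto simp: complete_idx_def)

lemma endpoint_pairs_mul_closed:
  assumes fin_S: "fin_sgd S" and x: "x \<in> endpoint_pairs A S \<phi>" and y: "y \<in> endpoint_pairs A S \<phi>"
  shows "sg_mul (sg_prod (consolidation S) (consolidation (fst (complete_idx A)))) x y \<in> endpoint_pairs A S \<phi>"
proof -
  note F = fin_sgdD[OF fin_S]
  let ?Z = "{prod_encode (x, 0) |x. x \<in> sg_car (consolidation S)}"
  show ?thesis
  proof (cases "x \<in> ?Z \<or> y \<in> ?Z")
    case True
    obtain x1 x2 y1 y2 where "x = prod_encode (x1, x2)" "y = prod_encode (y1, y2)"
      "x1 \<in> sg_car (consolidation S)" "y1 \<in> sg_car (consolidation S)" "x2 = 0 \<or> y2 = 0"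
      using True x y unfolding endpoint_pairs_def by (auto simp: consolidation_car)
    then show ?thesis unfolding endpoint_pairs_def using consolidation_closed[OF fin_S] by auto
  next
    case False
    then obtain s p1 q1 s' p2 q2 where xy:
      "x = prod_encode (Suc s, Suc (prod_encode (vertex_code A p1, vertex_code A q1)))"
      "s \<in> sd_E S" "p1 \<in> gverts A" "q1 \<in> gverts A" "sd_src S s = \<phi> q1" "sd_tgt S s = \<phi> p1"
      "y = prod_encode (Suc s', Suc (prod_encode (vertex_code A p2, vertex_code A q2)))"
      "s' \<in> sd_E S" "p2 \<in> gverts A" "q2 \<in> gverts A" "sd_src S s' = \<phi> q2" "sd_tgt S s' = \<phi> p2"
      using x y unfolding endpoint_pairs_def by blast
    show ?thesis
    proof (cases "q1 = p2")
      case True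
      then show ?thesis
        using xy consolidation_complete_idx_mul[OF xy(4) xy(9)] F(5,6,7) unfolding endpoint_pairs_def by auto
    next
      case False
      have "Suc s \<in> sg_car (consolidation S)" "Suc s' \<in> sg_car (consolidation S)"
        using xy(2,8) by (simp_all add: consolidation_car)
      then have "sg_mul (consolidation S) (Suc s) (Suc s') \<in> sg_car (consolidation S)"
        by (rule consolidation_closed[OF fin_S])
      then show ?thesis
        using xy False consolidation_complete_idx_mul[OF xy(4) xy(9)] unfolding endpoint_pairs_def by auto
    qed
  qed
qed

lemma value_at_consolidation_idx:
  assumes a: "a \<in> OmegaV V (gedges A)" and aK: "a endpoints_idx \<noteq> 0" and j: "j \<in> idxG (gV V) A"
  obtains s p q where "a (consolidation_idx A j) = Suc s" "s \<in> sd_E (fst j)"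
    "sd_src (fst j) s = vlab j q" "sd_tgt (fst j) s = vlab j p" "p \<in> gverts A" "q \<in> gverts A"
    "a endpoints_idx = Suc (prod_encode (vertex_code A p, vertex_code A q))"
proof -
  define S where "S = fst j"
  let ?P = "sg_prod (fst (consolidation_idx A j)) (fst endpoints_idx)"
  have P_eq: "?P = sg_prod (consolidation S) (consolidation (fst (complete_idx A)))"
    by (simp add: S_def consolidation_idx_def)
  have "prod_encode (a (consolidation_idx A j), a endpoints_idx) \<in> endpoint_pairs A S (vlab j)"
  proof (rule OmegaV_pair_in_subsemigroup[OF pv a consolidation_idx_in[OF j] consolidation_idx_in[OF complete_idx_in]])
    show "endpoint_pairs A S (vlab j) \<subseteq> sg_car ?P"
      unfolding P_eq endpoint_pairs_def by (auto simp: consolidation_car complete_idx_def)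
    show "endpoint_pairs A S (vlab j) \<noteq> {}"
      using zero_in_consolidation[of S] unfolding endpoint_pairs_def by blast
    show "\<forall>x\<in>endpoint_pairs A S (vlab j). \<forall>y\<in>endpoint_pairs A S (vlab j). sg_mul ?P x y \<in> endpoint_pairs A S (vlab j)"
      unfolding P_eq using endpoint_pairs_mul_closed fin_sgd_idx[OF j] by (simp add: S_def)
    show "\<forall>e\<in>gedges A. prod_encode (snd (consolidation_idx A j) e, snd endpoints_idx e) \<in> endpoint_pairs A S (vlab j)"
    proof
      fix e assume e: "e \<in> gedges A"
      have "elab j e \<in> sd_E S" "gtgt A e \<in> gverts A" "gsrc A e \<in> gverts A"
        using idxGD(3)[OF j] e graph unfolding is_graph_def by (auto simp: S_def PiE_iff)
      then show "prod_encode (snd (consolidation_idx A j) e, snd endpoints_idx e) \<in> endpoint_pairs A S (vlab j)"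
        using e idxGD(4,5)[OF j e] unfolding endpoint_pairs_def
        by (auto simp: consolidation_idx_def complete_idx_def S_def)
    qed
  qed
  then show ?thesis using aK that unfolding endpoint_pairs_def by (auto simp: S_def)
qed

lemma value_transport:
  assumes a: "a \<in> OmegaV V (gedges A)" and aK: "a endpoints_idx \<noteq> 0"
    and j: "j \<in> idxG (gV V) A" and i: "i \<in> idxG (gV V) A" and m: "idx_morph A j i hv he"
  shows "a (consolidation_idx A i) = Suc (he (a (consolidation_idx A j) - 1))"
proof -
  define S where "S = fst j"
  define T where "T = fst i"
  have M: "sgd_morph S T hv he" and lab: "\<And>e. e \<in> gedges A \<Longrightarrow> he (elab j e) = elab i e"
    using m unfolding idx_morph_def S_def T_def by auto
  have fin: "fin_sgd S" "fin_sgd T" using fin_sgd_idx[OF j] fin_sgd_idx[OF i] by (simp_all add: S_def T_def)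
  obtain s where s: "a (consolidation_idx A j) = Suc s"
    using value_at_consolidation_idx[OF a aK j] by metis
  obtain t where t: "a (consolidation_idx A i) = Suc t"
    using value_at_consolidation_idx[OF a aK i] by metis
  let ?P = "sg_prod (fst (consolidation_idx A j)) (fst (consolidation_idx A i))"
  have P_eq: "?P = sg_prod (consolidation S) (consolidation T)"
    by (simp add: S_def T_def consolidation_idx_def)
  have "prod_encode (a (consolidation_idx A j), a (consolidation_idx A i)) \<in> consolidation_graph S T he"
  proof (rule OmegaV_pair_in_subsemigroup[OF pv a consolidation_idx_in[OF j] consolidation_idx_in[OF i]])
    show "consolidation_graph S T he \<subseteq> sg_car ?P"
      unfolding P_eq consolidation_graph_def using sgd_morphD(2)[OF M] by (auto simp: consolidation_car)
    show "consolidation_graph S T he \<noteq> {}"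
      using zero_in_consolidation[of S] zero_in_consolidation[of T] unfolding consolidation_graph_def by blast
    show "\<forall>x\<in>consolidation_graph S T he. \<forall>y\<in>consolidation_graph S T he.
        sg_mul ?P x y \<in> consolidation_graph S T he"
      unfolding P_eq using consolidation_graph_mul_closed[OF fin M] by blast
    show "\<forall>e\<in>gedges A. prod_encode (snd (consolidation_idx A j) e, snd (consolidation_idx A i) e)
        \<in> consolidation_graph S T he"
    proof
      fix e assume e: "e \<in> gedges A"
      have "elab j e \<in> sd_E S" using idxGD(3)[OF j] e by (auto simp: S_def PiE_iff)
      then show "prod_encode (snd (consolidation_idx A j) e, snd (consolidation_idx A i) e)
          \<in> consolidation_graph S T he"
        unfolding consolidation_graph_def using e lab[OF e] by (force simp: consolidation_idx_def)
    qed
  qed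
  then obtain r where "a (consolidation_idx A j) = Suc r" "a (consolidation_idx A i) = Suc (he r)"
    using s t unfolding consolidation_graph_def by auto
  then show ?thesis by simp
qed

end

text \<open>The inverse of \<open>\<gamma>\<close> on its image, defined without reference to \<open>\<gamma>\<close>.\<close>
definition gamma_inv :: "fsgd set \<Rightarrow> ('v, 'e) graph \<Rightarrow> ((fsg \<times> ('e \<Rightarrow> nat)) \<Rightarrow> nat) \<Rightarrow> ('v, 'e) fedge" where
  "gamma_inv C A a =
    (inv_into (gverts A) (vertex_code A) (snd (prod_decode (a (consolidation_idx A (complete_idx A)) - 1))),
     inv_into (gverts A) (vertex_code A) (fst (prod_decode (a (consolidation_idx A (complete_idx A)) - 1))),
     restrict (\<lambda>j. a (consolidation_idx A j) - 1) (idxG C A))"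

context finite_graph_pv
begin

abbreviation edge_words :: "((fsg \<times> ('e \<Rightarrow> nat)) \<Rightarrow> nat) set" where
  "edge_words \<equiv> {a \<in> OmegaV V (gedges A). a endpoints_idx \<noteq> 0}"

lemma gamma_inv_in:
  assumes a: "a \<in> OmegaV V (gedges A)" and aK: "a endpoints_idx \<noteq> 0"
  shows "gamma_inv (gV V) A a \<in> EdgesG (gV V) A"
proof -
  obtain s p q where pq: "p \<in> gverts A" "q \<in> gverts A"
      "a endpoints_idx = Suc (prod_encode (vertex_code A p, vertex_code A q))"
    using value_at_consolidation_idx[OF a aK complete_idx_in] by metis
  have gamma_inv_eq: "gamma_inv (gV V) A a = (q, p, restrict (\<lambda>j. a (consolidation_idx A j) - 1) (idxG (gV V) A))"
    using pq inv_into_f_f[OF inj_code] by (simp add: gamma_inv_def)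
  have coord: "a (consolidation_idx A j) - 1 \<in> sd_E (fst j) \<and>
      sd_src (fst j) (a (consolidation_idx A j) - 1) = vlab j q \<and>
      sd_tgt (fst j) (a (consolidation_idx A j) - 1) = vlab j p" if j: "j \<in> idxG (gV V) A" for j
  proof -
    obtain s p' q' where W: "a (consolidation_idx A j) = Suc s" "s \<in> sd_E (fst j)"
      "sd_src (fst j) s = vlab j q'" "sd_tgt (fst j) s = vlab j p'" "p' \<in> gverts A" "q' \<in> gverts A"
      "a endpoints_idx = Suc (prod_encode (vertex_code A p', vertex_code A q'))"
      using value_at_consolidation_idx[OF a aK j] by blast
    have "p' = p" "q' = q" using W(5-7) pq inj_code by (simp_all add: inj_on_eq_iff)
    then show ?thesis using W by simp
  qed
  show ?thesis unfolding gamma_inv_eq EdgesG_iff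
  proof (intro conjI allI impI)
    show "q \<in> gverts A" "p \<in> gverts A" using pq by auto
    show "(\<lambda>j\<in>idxG (gV V) A. a (consolidation_idx A j) - 1) \<in> (\<Pi>\<^sub>E i\<in>idxG (gV V) A. sd_E (fst i))"
      using coord by (auto simp: PiE_iff)
  next
    fix S \<phi>v \<phi>e assume j: "(S, \<phi>v, \<phi>e) \<in> idxG (gV V) A"
    show "sd_src S ((\<lambda>j\<in>idxG (gV V) A. a (consolidation_idx A j) - 1) (S, \<phi>v, \<phi>e)) = \<phi>v q"
      "sd_tgt S ((\<lambda>j\<in>idxG (gV V) A. a (consolidation_idx A j) - 1) (S, \<phi>v, \<phi>e)) = \<phi>v p"
      using coord[OF j] j by auto
  next
    fix S \<phi>v \<phi>e T \<psi>v \<psi>e hv he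
    assume h: "(S, \<phi>v, \<phi>e) \<in> idxG (gV V) A \<and> (T, \<psi>v, \<psi>e) \<in> idxG (gV V) A \<and>
          sgd_morph S T hv he \<and> (\<forall>x\<in>gverts A. hv (\<phi>v x) = \<psi>v x) \<and> (\<forall>e\<in>gedges A. he (\<phi>e e) = \<psi>e e)"
    then have j: "(S, \<phi>v, \<phi>e) \<in> idxG (gV V) A" and i: "(T, \<psi>v, \<psi>e) \<in> idxG (gV V) A"
      and m: "idx_morph A (S, \<phi>v, \<phi>e) (T, \<psi>v, \<psi>e) hv he" unfolding idx_morph_def by auto
    show "he ((\<lambda>j\<in>idxG (gV V) A. a (consolidation_idx A j) - 1) (S, \<phi>v, \<phi>e)) =
        (\<lambda>j\<in>idxG (gV V) A. a (consolidation_idx A j) - 1) (T, \<psi>v, \<psi>e)"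
      using value_transport[OF a aK j i m] j i by simp
  qed
qed

end

lemma continuous_map_topV_eval:
  "c \<in> idxV V X \<Longrightarrow> continuous_map (topV V X) (discrete_topology (sg_car (fst c))) (\<lambda>a. a c)"
  unfolding topV_def by (rule continuous_map_from_subtopology[OF continuous_map_product_projection])

lemma continuous_map_discrete_comp:
  assumes "continuous_map Z (discrete_topology U) p" "p \<in> topspace Z \<rightarrow> U'" "h \<in> U \<inter> U' \<rightarrow> W"
  shows "continuous_map Z (discrete_topology W) (h \<circ> p)"
proof -
  have "continuous_map Z (subtopology (discrete_topology U) U') p"
    by (rule continuous_map_into_subtopology[OF assms(1,2)])
  then have "continuous_map Z (discrete_topology (U \<inter> U')) p" by simp
  moreover have "continuous_map (discrete_topology (U \<inter> U')) (discrete_topology W) h" using assms(3) by simp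
  ultimately show ?thesis by (rule continuous_map_compose)
qed

context finite_graph_pv
begin

lemma openin_edge_words: "openin (topV V (gedges A)) edge_words"
proof -
  let ?P = "product_topology (\<lambda>i. discrete_topology (sg_car (fst i))) (idxV V (gedges A))"
  have K: "endpoints_idx \<in> idxV V (gedges A)" by (rule consolidation_idx_in[OF complete_idx_in])
  have "openin ?P {f \<in> topspace ?P. f endpoints_idx \<in> sg_car (fst endpoints_idx) - {0}}"
    by (rule openin_continuous_map_preimage[OF continuous_map_product_projection[OF K]]) simp
  moreover have "edge_words = {f \<in> topspace ?P. f endpoints_idx \<in> sg_car (fst endpoints_idx) - {0}} \<inter> OmegaV V (gedges A)"
  proof -
    have "a \<in> topspace ?P \<and> a endpoints_idx \<in> sg_car (fst endpoints_idx)" if "a \<in> OmegaV V (gedges A)" for a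
      using that OmegaV_val[OF that K] unfolding OmegaV_iff by auto
    then show ?thesis by (intro set_eqI) auto
  qed
  ultimately show ?thesis unfolding topV_def openin_subtopology by blast
qed

lemma topspace_edge_words: "topspace (subtopology (topV V (gedges A)) edge_words) = edge_words"
  using topV_space by auto

lemma continuous_gamma_inv:
  "continuous_map (subtopology (topV V (gedges A)) edge_words) (topG (gV V) A) (gamma_inv (gV V) A)"
proof -
  let ?Z = "subtopology (topV V (gedges A)) edge_words"
  have eval: "continuous_map ?Z (discrete_topology (sg_car (fst c))) (\<lambda>a. a c)" if "c \<in> idxV V (gedges A)" for c
    by (rule continuous_map_from_subtopology[OF continuous_map_topV_eval[OF that]])
  have K: "endpoints_idx \<in> idxV V (gedges A)" by (rule consolidation_idx_in[OF complete_idx_in])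
  have K_nonzero: "(\<lambda>a. a endpoints_idx) \<in> topspace ?Z \<rightarrow> {n. n \<noteq> 0}" using topspace_edge_words by auto
  have decode_vertex: "(\<lambda>n. inv_into (gverts A) (vertex_code A) (f (prod_decode (n - 1))))
      \<in> sg_car (fst endpoints_idx) \<inter> {n. n \<noteq> 0} \<rightarrow> gverts A" if "f = fst \<or> f = snd" for f
  proof
    fix n assume "n \<in> sg_car (fst endpoints_idx) \<inter> {n. n \<noteq> 0}"
    then obtain p q where "p \<in> gverts A" "q \<in> gverts A" "n - 1 = prod_encode (vertex_code A p, vertex_code A q)"
      by (auto simp: consolidation_idx_def complete_idx_def consolidation_car)
    then show "inv_into (gverts A) (vertex_code A) (f (prod_decode (n - 1))) \<in> gverts A"
      using that inv_into_f_f[OF inj_code] by auto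
  qed
  have vertex: "continuous_map ?Z (discrete_topology (gverts A))
      (\<lambda>a. inv_into (gverts A) (vertex_code A) (f (prod_decode (a endpoints_idx - 1))))" if "f = fst \<or> f = snd" for f
    using continuous_map_discrete_comp[OF eval[OF K] K_nonzero decode_vertex[OF that]] by (simp add: o_def)
  have coords: "continuous_map ?Z (product_topology (\<lambda>i. discrete_topology (sd_E (fst i))) (idxG (gV V) A))
      (\<lambda>a. restrict (\<lambda>j. a (consolidation_idx A j) - 1) (idxG (gV V) A))"
    unfolding continuous_map_componentwise
  proof (intro conjI ballI)
    fix k assume k: "k \<in> idxG (gV V) A"
    have "a (consolidation_idx A k) \<noteq> 0" if "a \<in> topspace ?Z" for a
    proof -
      have "a \<in> OmegaV V (gedges A)" "a endpoints_idx \<noteq> 0" using that topspace_edge_words by auto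
      then show ?thesis by (rule value_at_consolidation_idx[OF _ _ k]) simp
    qed
    then have "(\<lambda>a. a (consolidation_idx A k)) \<in> topspace ?Z \<rightarrow> {n. n \<noteq> 0}" by blast
    moreover have "(\<lambda>n. n - 1) \<in> sg_car (fst (consolidation_idx A k)) \<inter> {n. n \<noteq> 0} \<rightarrow> sd_E (fst k)"
      by (auto simp: consolidation_idx_def consolidation_car)
    ultimately show "continuous_map ?Z (discrete_topology (sd_E (fst k)))
        (\<lambda>a. restrict (\<lambda>j. a (consolidation_idx A j) - 1) (idxG (gV V) A) k)"
      using continuous_map_discrete_comp[OF eval[OF consolidation_idx_in[OF k]]] k by (simp add: o_def)
  qed auto
  have "continuous_map ?Z (prod_topology (discrete_topology (gverts A))
       (prod_topology (discrete_topology (gverts A))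
         (product_topology (\<lambda>i. discrete_topology (sd_E (fst i))) (idxG (gV V) A)))) (gamma_inv (gV V) A)"
    unfolding gamma_inv_def continuous_map_paired using vertex coords by simp
  moreover have "gamma_inv (gV V) A \<in> topspace ?Z \<rightarrow> EdgesG (gV V) A"
    using topspace_edge_words gamma_inv_in by auto
  ultimately show ?thesis unfolding topG_def by (rule continuous_map_into_subtopology)
qed

end

section \<open>The projection \<open>\<gamma>\<close>\<close>

locale free_gV_projection = finite_graph_pv A V for A :: "('v, 'e) graph" and V +
  fixes \<gamma> :: "('v, 'e) fedge \<Rightarrow> ((fsg \<times> ('e \<Rightarrow> nat)) \<Rightarrow> nat)"
  assumes gamma_maps: "\<gamma> \<in> EdgesG (gV V) A \<rightarrow> OmegaV V (gedges A)"
    and gamma_cont: "continuous_map (topG (gV V) A) (topV V (gedges A)) \<gamma>"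
    and gamma_mul: "\<forall>x\<in>EdgesG (gV V) A. \<forall>y\<in>EdgesG (gV V) A. e_src x = e_tgt y \<longrightarrow>
                \<gamma> (mulG (gV V) A x y) = mulV V (gedges A) (\<gamma> x) (\<gamma> y)"
    and gamma_gen: "\<forall>e\<in>gedges A. \<gamma> (genG (gV V) A e) = genV V (gedges A) e"
begin

lemma gamma_gen_path:
  assumes "y \<in> gen_paths (gV V) A" "j \<in> idxG (gV V) A"
  shows "\<gamma> y (consolidation_idx A j) = Suc (coord y j)"
  using assms
proof (induction arbitrary: j)
  case (gen e)
  have "\<gamma> (genG (gV V) A e) (consolidation_idx A j) = genV V (gedges A) e (consolidation_idx A j)"
    using gen.hyps by (simp add: gamma_gen)
  also have "\<dots> = Suc (elab j e)"
    using consolidation_idx_in[OF gen.prems] gen.hyps by (simp add: genV_def consolidation_idx_def)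
  finally show ?case using genG_simps(3)[OF gen.prems] by simp
next
  case (mul x y)
  have x: "x \<in> EdgesG (gV V) A" and y: "y \<in> EdgesG (gV V) A" using mul gen_paths_subset by auto
  have composable: "sd_src (fst j) (coord x j) = sd_tgt (fst j) (coord y j)"
    using EdgesG_coord[OF x mul.prems] EdgesG_coord[OF y mul.prems] mul.hyps(3) by simp
  have "\<gamma> (mulG (gV V) A x y) (consolidation_idx A j) = mulV V (gedges A) (\<gamma> x) (\<gamma> y) (consolidation_idx A j)"
    using gamma_mul x y mul.hyps(3) by simp
  also have "\<dots> = sg_mul (consolidation (fst j)) (\<gamma> x (consolidation_idx A j)) (\<gamma> y (consolidation_idx A j))"
    using consolidation_idx_in[OF mul.prems] by (simp add: mulV_def consolidation_idx_def)
  also have "\<dots> = Suc (sd_mul (fst j) (coord x j) (coord y j))"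
    using mul.IH mul.prems composable by simp
  finally show ?case using mulG_simps(3)[OF mul.prems] by simp
qed

text \<open>By continuity, \<open>\<gamma>\<close> inherits this from the dense set of finite paths.\<close>
lemma gamma_consolidation_idx:
  assumes x: "x \<in> EdgesG (gV V) A" and j: "j \<in> idxG (gV V) A"
  shows "\<gamma> x (consolidation_idx A j) = Suc (coord x j)"
proof -
  let ?c = "consolidation_idx A j"
  have "continuous_map (topG (gV V) A) (discrete_topology (sg_car (fst ?c))) (\<lambda>y. \<gamma> y ?c)"
    using continuous_map_compose[OF gamma_cont continuous_map_topV_eval[OF consolidation_idx_in[OF j]]]
    by (simp add: o_def)
  moreover have "\<gamma> x ?c \<in> sg_car (fst ?c)" using gamma_maps x OmegaV_val[OF _ consolidation_idx_in[OF j]] by auto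
  ultimately have "openin (topG (gV V) A) {y \<in> topspace (topG (gV V) A). \<gamma> y ?c \<in> {\<gamma> x ?c}}"
    by (intro openin_continuous_map_preimage) auto
  moreover have "x \<in> {y \<in> topspace (topG (gV V) A). \<gamma> y ?c \<in> {\<gamma> x ?c}}" using x topG_space by auto
  ultimately obtain F where F: "finite F" "F \<subseteq> idxG (gV V) A"
    "\<And>y. y \<in> EdgesG (gV V) A \<Longrightarrow> e_src y = e_src x \<Longrightarrow> e_tgt y = e_tgt x \<Longrightarrow>
      \<forall>i\<in>F. coord y i = coord x i \<Longrightarrow> \<gamma> y ?c = \<gamma> x ?c"
    by (rule topG_open_nbhd_coords) auto
  obtain y where y: "y \<in> gen_paths (gV V) A" "e_src y = e_src x" "e_tgt y = e_tgt x"
    "\<forall>i\<in>insert j F. coord y i = coord x i"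
    using gen_paths_dense[OF x, of "insert j F"] F(1,2) j by auto
  have "\<gamma> y ?c = \<gamma> x ?c" by (rule F(3)) (use y gen_paths_subset in auto)
  then have "\<gamma> x ?c = \<gamma> y ?c" by simp
  also have "\<dots> = Suc (coord x j)" using gamma_gen_path[OF y(1) j] y(4) by simp
  finally show ?thesis .
qed

lemma gamma_endpoints_idx:
  "x \<in> EdgesG (gV V) A \<Longrightarrow>
    \<gamma> x endpoints_idx = Suc (prod_encode (vertex_code A (e_tgt x), vertex_code A (e_src x)))"
  using gamma_consolidation_idx[OF _ complete_idx_in] EdgesG_coord_complete_idx[OF _ complete_idx_in] by simp

lemma gamma_gamma_inv:
  assumes a: "a \<in> OmegaV V (gedges A)" and aK: "a endpoints_idx \<noteq> 0"
  shows "\<gamma> (gamma_inv (gV V) A a) = a"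
proof -
  let ?x = "gamma_inv (gV V) A a"
  have x: "?x \<in> EdgesG (gV V) A" by (rule gamma_inv_in[OF a aK])
  have b: "\<gamma> ?x \<in> OmegaV V (gedges A)" using gamma_maps x by auto
  show ?thesis
  proof (rule extensionalityI[OF OmegaV_extensional[OF b] OmegaV_extensional[OF a]])
    fix i assume i: "i \<in> idxV V (gedges A)"
    obtain T \<psi> where i_eq: "i = (T, \<psi>)" by (cases i)
    have T: "T \<in> V" "\<psi> \<in> PiE (gedges A) (\<lambda>_. sg_car T)" using i by (auto simp: i_eq idxV_iff)
    define j where "j = (sg_as_sgd T, restrict (\<lambda>_. 0::nat) (gverts A), \<psi>)"
    have j: "j \<in> idxG (gV V) A"
      using gV_sg_as_sgd[OF T(1)] T(2) graph unfolding j_def idxG_iff is_graph_def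
      by (auto simp: sg_as_sgd_def PiE_iff)
    have Suc_hom: "sg_hom T (consolidation (sg_as_sgd T)) Suc"
      unfolding sg_hom_def by (auto simp: consolidation_car sg_as_sgd_def)
    have Suc_value: "Suc (c i) = c (consolidation_idx A j)" if "c \<in> OmegaV V (gedges A)" for c
      using OmegaV_compat[OF that i[unfolded i_eq] consolidation_idx_in[OF j, unfolded consolidation_idx_def j_def fst_conv snd_conv] Suc_hom]
      by (simp add: i_eq j_def consolidation_idx_def)
    obtain s where s: "a (consolidation_idx A j) = Suc s"
      using value_at_consolidation_idx[OF a aK j] by metis
    have "\<gamma> ?x (consolidation_idx A j) = Suc (coord ?x j)" by (rule gamma_consolidation_idx[OF x j])
    also have "\<dots> = a (consolidation_idx A j)" using s j by (simp add: gamma_inv_def)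
    finally show "\<gamma> ?x i = a i" using Suc_value[OF b] Suc_value[OF a] by simp
  qed
qed

lemma gamma_inv_gamma:
  assumes x: "x \<in> EdgesG (gV V) A"
  shows "gamma_inv (gV V) A (\<gamma> x) = x"
proof (rule EdgesG_eqI[OF x])
  show "e_src (gamma_inv (gV V) A (\<gamma> x)) = e_src x" "e_tgt (gamma_inv (gV V) A (\<gamma> x)) = e_tgt x"
    using gamma_endpoints_idx[OF x] EdgesG_verts[OF x] inv_into_f_f[OF inj_code]
    by (simp_all add: gamma_inv_def e_src_def e_tgt_def)
  show "coord (gamma_inv (gV V) A (\<gamma> x)) \<in> extensional (idxG (gV V) A)"
    by (simp add: gamma_inv_def)
  show "coord (gamma_inv (gV V) A (\<gamma> x)) j = coord x j" if "j \<in> idxG (gV V) A" for j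
    using gamma_consolidation_idx[OF x that] that by (simp add: gamma_inv_def)
qed

lemma image_gamma: "\<gamma> ` EdgesG (gV V) A = edge_words"
proof
  show "\<gamma> ` EdgesG (gV V) A \<subseteq> edge_words" using gamma_maps gamma_endpoints_idx by auto
  show "edge_words \<subseteq> \<gamma> ` EdgesG (gV V) A"
    using gamma_gamma_inv gamma_inv_in by (auto intro!: image_eqI[where x = "gamma_inv (gV V) A _"])
qed

lemma homeomorphic_maps_gamma:
  "homeomorphic_maps (topG (gV V) A) (subtopology (topV V (gedges A)) edge_words) \<gamma> (gamma_inv (gV V) A)"
  unfolding homeomorphic_maps_def
proof (intro conjI ballI)
  show "continuous_map (topG (gV V) A) (subtopology (topV V (gedges A)) edge_words) \<gamma>"
    using image_gamma by (intro continuous_map_into_subtopology[OF gamma_cont]) (auto simp: topG_space)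
  show "continuous_map (subtopology (topV V (gedges A)) edge_words) (topG (gV V) A) (gamma_inv (gV V) A)"
    by (rule continuous_gamma_inv)
next
  fix x assume "x \<in> topspace (topG (gV V) A)"
  then show "gamma_inv (gV V) A (\<gamma> x) = x" using gamma_inv_gamma by (simp add: topG_space)
next
  fix a assume "a \<in> topspace (subtopology (topV V (gedges A)) edge_words)"
  then show "\<gamma> (gamma_inv (gV V) A a) = a" using gamma_gamma_inv topspace_edge_words by simp
qed

lemma embedding_map_gamma: "embedding_map (topG (gV V) A) (topV V (gedges A)) \<gamma>"
  using homeomorphic_maps_imp_map[OF homeomorphic_maps_gamma] image_gamma
  by (simp add: embedding_map_def topG_space)

lemma open_map_gamma: "open_map (topG (gV V) A) (topV V (gedges A)) \<gamma>"
  unfolding open_map_def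
proof (intro allI impI)
  fix U assume U: "openin (topG (gV V) A) U"
  have "U \<subseteq> EdgesG (gV V) A" using openin_subset[OF U] by (simp add: topG_space)
  have "\<gamma> ` U = {a \<in> topspace (subtopology (topV V (gedges A)) edge_words). gamma_inv (gV V) A a \<in> U}"
  proof
    show "\<gamma> ` U \<subseteq> {a \<in> topspace (subtopology (topV V (gedges A)) edge_words). gamma_inv (gV V) A a \<in> U}"
      using \<open>U \<subseteq> EdgesG (gV V) A\<close> image_gamma gamma_inv_gamma topspace_edge_words by auto
    show "{a \<in> topspace (subtopology (topV V (gedges A)) edge_words). gamma_inv (gV V) A a \<in> U} \<subseteq> \<gamma> ` U"
    proof
      fix a assume "a \<in> {a \<in> topspace (subtopology (topV V (gedges A)) edge_words). gamma_inv (gV V) A a \<in> U}"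
      then have "\<gamma> (gamma_inv (gV V) A a) = a" "gamma_inv (gV V) A a \<in> U"
        using gamma_gamma_inv topspace_edge_words by auto
      then show "a \<in> \<gamma> ` U" by (metis image_eqI)
    qed
  qed
  then have "openin (subtopology (topV V (gedges A)) edge_words) (\<gamma> ` U)"
    using openin_continuous_map_preimage[OF continuous_gamma_inv U] by simp
  then show "openin (topV V (gedges A)) (\<gamma> ` U)" using openin_open_subtopology[OF openin_edge_words] by blast
qed

text \<open>Zero is a zero of the consolidation, so a product is nonzero at the endpoints index only
  if both factors are.\<close>
lemma factorial_image_gamma:
  "factorial_in (mulV V (gedges A)) (OmegaV V (gedges A)) (\<gamma> ` EdgesG (gV V) A)"
  unfolding factorial_in_def image_gamma
proof (intro conjI subsetI ballI impI)
  fix x y assume x: "x \<in> OmegaV V (gedges A)" and y: "y \<in> OmegaV V (gedges A)"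
    and xy: "mulV V (gedges A) x y \<in> edge_words"
  have "mulV V (gedges A) x y endpoints_idx = sg_mul (fst endpoints_idx) (x endpoints_idx) (y endpoints_idx)"
    using consolidation_idx_in[OF complete_idx_in] by (simp add: mulV_def)
  then have "sg_mul (consolidation (fst (complete_idx A))) (x endpoints_idx) (y endpoints_idx) \<noteq> 0"
    using xy by (simp add: consolidation_idx_def)
  then show "x \<in> edge_words" "y \<in> edge_words" using consolidation_mul_nonzero x y by blast+
qed blast

lemma gamma_mul_reflects:
  assumes x: "x \<in> EdgesG (gV V) A" and y: "y \<in> EdgesG (gV V) A" and z: "z \<in> EdgesG (gV V) A"
    and xyz: "mulV V (gedges A) (\<gamma> x) (\<gamma> y) = \<gamma> z"
  shows "e_src x = e_tgt y \<and> mulG (gV V) A x y = z"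
proof -
  have "mulV V (gedges A) (\<gamma> x) (\<gamma> y) endpoints_idx =
      sg_mul (fst endpoints_idx) (\<gamma> x endpoints_idx) (\<gamma> y endpoints_idx)"
    using consolidation_idx_in[OF complete_idx_in] by (simp add: mulV_def)
  then have "sg_mul (fst endpoints_idx) (\<gamma> x endpoints_idx) (\<gamma> y endpoints_idx) = \<gamma> z endpoints_idx"
    using xyz by simp
  then have "vertex_code A (e_src x) = vertex_code A (e_tgt y)"
    using gamma_endpoints_idx[OF x] gamma_endpoints_idx[OF y] gamma_endpoints_idx[OF z]
    by (simp add: consolidation_idx_def complete_idx_def split: if_splits)
  then have composable: "e_src x = e_tgt y"
    using inj_code EdgesG_verts[OF x] EdgesG_verts[OF y] by (simp add: inj_on_eq_iff)
  then have "\<gamma> (mulG (gV V) A x y) = \<gamma> z" using gamma_mul x y xyz by simp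
  then have "gamma_inv (gV V) A (\<gamma> (mulG (gV V) A x y)) = gamma_inv (gV V) A (\<gamma> z)" by simp
  then show ?thesis using gamma_inv_gamma[OF mulG_in[OF x y composable]] gamma_inv_gamma[OF z] composable by simp
qed

end

theorem mainTheorem6:
  fixes A :: "('v, 'e) graph" and V :: "fsg set"
    and \<gamma> :: "('v, 'e) fedge \<Rightarrow> ((fsg \<times> ('e \<Rightarrow> nat)) \<Rightarrow> nat)"
  assumes graph: "is_graph A"
    and finV: "finite (gverts A)"
    and pv: "pv_sg V"
    and B2: "B2 \<in> V"
    and maps: "\<gamma> \<in> EdgesG (gV V) A \<rightarrow> OmegaV V (gedges A)"
    and cont: "continuous_map (topG (gV V) A) (topV V (gedges A)) \<gamma>"
    and hom: "\<forall>x\<in>EdgesG (gV V) A. \<forall>y\<in>EdgesG (gV V) A. e_src x = e_tgt y \<longrightarrow>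
                \<gamma> (mulG (gV V) A x y) = mulV V (gedges A) (\<gamma> x) (\<gamma> y)"
    and gen: "\<forall>e\<in>gedges A. \<gamma> (genG (gV V) A e) = genV V (gedges A) e"
  shows "openin (topV V (gedges A)) (\<gamma> ` EdgesG (gV V) A)
       \<and> factorial_in (mulV V (gedges A)) (OmegaV V (gedges A)) (\<gamma> ` EdgesG (gV V) A)
       \<and> open_map (topG (gV V) A) (topV V (gedges A)) \<gamma>
       \<and> embedding_map (topG (gV V) A) (topV V (gedges A)) \<gamma>
       \<and> (\<forall>x\<in>EdgesG (gV V) A. \<forall>y\<in>EdgesG (gV V) A. \<forall>z\<in>EdgesG (gV V) A.
            mulV V (gedges A) (\<gamma> x) (\<gamma> y) = \<gamma> z \<longrightarrow>
            e_src x = e_tgt y \<and> mulG (gV V) A x y = z)"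
proof -
  interpret free_gV_projection A V \<gamma>
    using graph finV pv B2 maps cont hom gen by unfold_locales
  have "openin (topV V (gedges A)) (\<gamma> ` EdgesG (gV V) A)"
    unfolding image_gamma by (rule openin_edge_words)
  then show ?thesis
    using factorial_image_gamma open_map_gamma embedding_map_gamma gamma_mul_reflects by blast
qed

end
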